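(* With the notation of the context, let $\beta^*=\inf_{x\in\Delta}F(x)$, $\alpha^*=\inf_{x\in\Delta}G(x)$, let $x^*\in\Delta$ satisfy $F(x^* )=\beta^*$, and let $a^*,b^*,c^*\in(0,1)$ be such that $x^*(\psi)=a^*$ for $\psi$ of type 1, $x^*(\psi)=b^*$ for $\psi$ of type 2, 3 or 5, and $x^*(\psi)=c^*$ for $\psi$ of type 4. Then (i) $a^*=\dfrac{1}{(2n-1)\alpha_n+1}$, $b^*=\dfrac{(2n-1)(\alpha_n-1)}{(4n^2-4n-1)(2n-1)\alpha_n^2+2(2n^2-1)\alpha_n-(2n-1)}$, $c^*=\dfrac{2n-1}{2n-1+\alpha_n}$; (ii) $\beta^*=\alpha^*=\alpha_n$.
   Context: Fix an integer $n\ge2$ and free generators $\xi_1,\dots,\xi_n$ of a free group; throughout $i,j,k\in\{1,\dots,n\}$ and $t,s,p\in\{-1,+1\}$. Let $\Psi$ be the set of reduced words $\xi_i^{2t}$; $\xi_i^t\xi_j^{2s}$ ($i\ne j$); $\xi_i^t\xi_j^s\xi_k^p$ ($i\ne j$, $j\ne k$). Types: type 1 $=\xi_i^{2t}$; type 2 $=\xi_i^t\xi_j^{2s}$; type 3 $=\xi_i^t\xi_j^s\xi_i^t$; type 4 $=\xi_i^t\xi_j^s\xi_i^{-t}$; type 5 $=\xi_i^t\xi_j^s\xi_k^p$ with $i,j,k$ pairwise distinct. For a letter $\xi_a^x$ let $S(\xi_a^x)\subset\Psi$ be the set of words in $\Psi$ beginning with $\xi_a^x$, namely $\{\xi_a^{2x}\}\cup\{\xi_a^x\xi_j^{2s}\}\cup\{\xi_a^x\xi_j^s\xi_k^p\}$;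 for $a\ne b$ let $S(\xi_a^x\xi_b^y)=\{\xi_a^x\xi_b^{2y}\}\cup\{\xi_a^x\xi_b^y\xi_k^p: k\ne b\}$. A relation $r$ is a pair $(\psi_r,\Psi_r)$ with $\psi_r\in\Psi$, $\Psi_r\subseteq\Psi$; the relations considered are (indices $i_0\ne j_0$, in type 5 $i_0,j_0,k_0$ pairwise distinct, all signs arbitrary): 1a: $\psi_r=\xi_{i_0}^{2t_0}$, $\Psi_r=\Psi\setminus S(\xi_{i_0}^{t_0})$; 1b: $\psi_r=\xi_{i_0}^{2t_0}$, $\Psi_r=\Psi\setminus\{\xi_{i_0}^{t_0}\xi_{j_0}^{s_0}\xi_{i_0}^{t_0}\}$; 2a: $\psi_r=\xi_{i_0}^{t_0}\xi_{j_0}^{2s_0}$, $\Psi_r=\Psi\setminus\{\xi_{j_0}^{2s_0}\}$; 2b: $\psi_r=\xi_{i_0}^{t_0}\xi_{j_0}^{2s_0}$, $\Psi_r=\Psi\setminus S(\xi_{i_0}^{t_0}\xi_{j_0}^{s_0})$; 3a: $\psi_r=\xi_{i_0}^{t_0}\xi_{j_0}^{s_0}\xi_{i_0}^{t_0}$, $\Psi_r=\Psi\setminus S(\xi_{j_0}^{s_0}\xi_{i_0}^{t_0})$; 3b: $\psi_r=\xi_{i_0}^{t_0}\xi_{j_0}^{s_0}\xi_{i_0}^{t_0}$, $\Psi_r=\Psi\setminus\{\xi_{i_0}^{2t_0}\}$; 4a: $\psi_r=\xi_{i_0}^{t_0}\xi_{j_0}^{s_0}\xi_{i_0}^{-t_0}$,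 $\Psi_r=\Psi\setminus S(\xi_{j_0}^{s_0}\xi_{i_0}^{-t_0})$; 4b: $\psi_r=\xi_{i_0}^{t_0}\xi_{j_0}^{s_0}\xi_{i_0}^{-t_0}$, $\Psi_r=S(\xi_{i_0}^{t_0})$; 5a: $\psi_r=\xi_{i_0}^{t_0}\xi_{j_0}^{s_0}\xi_{k_0}^{p_0}$, $\Psi_r=\Psi\setminus S(\xi_{j_0}^{s_0}\xi_{k_0}^{p_0})$; 5b: $\psi_r=\xi_{i_0}^{t_0}\xi_{j_0}^{s_0}\xi_{k_0}^{p_0}$, $\Psi_r=\Psi\setminus S(\xi_{i_0}^{t_0}\xi_{k_0}^{p_0})$. Let $\mathcal{G}$ be the collection of all these relations and $\mathcal{F}\subset\mathcal{G}$ those of types 1a, 2b, 3a, 4b, 5a. Let $\Delta=\{x\in\mathbb{R}^\Psi: x(\psi)>0\ \forall\psi,\ \sum_{\psi}x(\psi)=1\}$. For a relation $r$ and $x\in\Delta$ put $x_r=x(\psi_r)$, $X_r=\sum_{\psi\in\Psi_r}x(\psi)$, $f_r(x)=\frac{1-x_r}{x_r}\cdot\frac{1-X_r}{X_r}$, $F(x)=\max_{r\in\mathcal{F}}f_r(x)$, $G(x)=\max_{r\in\mathcal{G}}f_r(x)$. The number $\alpha_n$ is the unique real root greater than $(2n-1)^2$ of $\mathcal{P}(\lambda)=(8n^3-12n^2+2n+1)\lambda^4+(-64n^6+192n^5-192n^4+64n^3+4n^2+2n-4)\lambda^3+(-96n^5+224n^4-168n^3+52n^2-18n+6)\lambda^2+(32n^5-112n^4+128n^3-68n^2+22n-4)\lambda+16n^4-32n^3+24n^2-8n+1.$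 *)

theory Defs
  imports Main Complex_Main
begin

text \<open>A letter xi_i^t is encoded as the pair (i, t) with i in {1..n} and t in {-1, 1};
  a word is a list of letters (so xi_i^{2t} is the list [(i,t),(i,t)]).\<close>

type_synonym letter = "nat \<times> int"
type_synonym word = "letter list"

definition Sg :: "int set" where "Sg = {-1, 1}"

definition Psi :: "nat \<Rightarrow> word set" where
  "Psi n =
     {[(i,t),(i,t)] | i t. i \<in> {1..n} \<and> t \<in> Sg}
   \<union> {[(i,t),(j,s),(j,s)] | i t j s. i \<in> {1..n} \<and> j \<in> {1..n} \<and> t \<in> Sg \<and> s \<in> Sg \<and> i \<noteq> j}
   \<union> {[(i,t),(j,s),(k,p)] | i t j s k p. i \<in> {1..n} \<and> j \<in> {1..n} \<and> k \<in> {1..n}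
        \<and> t \<in> Sg \<and> s \<in> Sg \<and> p \<in> Sg \<and> i \<noteq> j \<and> j \<noteq> k}"

definition type1 :: "nat \<Rightarrow> word \<Rightarrow> bool" where
  "type1 n w \<longleftrightarrow> (\<exists>i t. i \<in> {1..n} \<and> t \<in> Sg \<and> w = [(i,t),(i,t)])"
definition type2 :: "nat \<Rightarrow> word \<Rightarrow> bool" where
  "type2 n w \<longleftrightarrow> (\<exists>i t j s. i \<in> {1..n} \<and> j \<in> {1..n} \<and> t \<in> Sg \<and> s \<in> Sg \<and> i \<noteq> j
      \<and> w = [(i,t),(j,s),(j,s)])"
definition type3 :: "nat \<Rightarrow> word \<Rightarrow> bool" where
  "type3 n w \<longleftrightarrow> (\<exists>i t j s. i \<in> {1..n} \<and> j \<in> {1..n} \<and> t \<in> Sg \<and> s \<in> Sg \<and> i \<noteq> j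
      \<and> w = [(i,t),(j,s),(i,t)])"
definition type4 :: "nat \<Rightarrow> word \<Rightarrow> bool" where
  "type4 n w \<longleftrightarrow> (\<exists>i t j s. i \<in> {1..n} \<and> j \<in> {1..n} \<and> t \<in> Sg \<and> s \<in> Sg \<and> i \<noteq> j
      \<and> w = [(i,t),(j,s),(i,-t)])"
definition type5 :: "nat \<Rightarrow> word \<Rightarrow> bool" where
  "type5 n w \<longleftrightarrow> (\<exists>i t j s k p. i \<in> {1..n} \<and> j \<in> {1..n} \<and> k \<in> {1..n}
      \<and> t \<in> Sg \<and> s \<in> Sg \<and> p \<in> Sg \<and> i \<noteq> j \<and> j \<noteq> k \<and> i \<noteq> k
      \<and> w = [(i,t),(j,s),(k,p)])"

definition S1 :: "nat \<Rightarrow> nat \<Rightarrow> int \<Rightarrow> word set" where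
  "S1 n a x = {w \<in> Psi n. w \<noteq> [] \<and> hd w = (a, x)}"

definition S2 :: "nat \<Rightarrow> nat \<Rightarrow> int \<Rightarrow> nat \<Rightarrow> int \<Rightarrow> word set" where
  "S2 n a x b y = {[(a,x),(b,y),(b,y)]}
     \<union> {[(a,x),(b,y),(k,p)] | k p. k \<in> {1..n} \<and> p \<in> Sg \<and> k \<noteq> b}"

type_synonym relation = "word \<times> word set"

definition R1a :: "nat \<Rightarrow> relation set" where
  "R1a n = {([(i,t),(i,t)], Psi n - S1 n i t) | i t. i \<in> {1..n} \<and> t \<in> Sg}"
definition R1b :: "nat \<Rightarrow> relation set" where
  "R1b n = {([(i,t),(i,t)], Psi n - {[(i,t),(j,s),(i,t)]}) | i t j s.
     i \<in> {1..n} \<and> j \<in> {1..n} \<and> t \<in> Sg \<and> s \<in> Sg \<and> i \<noteq> j}"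
definition R2a :: "nat \<Rightarrow> relation set" where
  "R2a n = {([(i,t),(j,s),(j,s)], Psi n - {[(j,s),(j,s)]}) | i t j s.
     i \<in> {1..n} \<and> j \<in> {1..n} \<and> t \<in> Sg \<and> s \<in> Sg \<and> i \<noteq> j}"
definition R2b :: "nat \<Rightarrow> relation set" where
  "R2b n = {([(i,t),(j,s),(j,s)], Psi n - S2 n i t j s) | i t j s.
     i \<in> {1..n} \<and> j \<in> {1..n} \<and> t \<in> Sg \<and> s \<in> Sg \<and> i \<noteq> j}"
definition R3a :: "nat \<Rightarrow> relation set" where
  "R3a n = {([(i,t),(j,s),(i,t)], Psi n - S2 n j s i t) | i t j s.
     i \<in> {1..n} \<and> j \<in> {1..n} \<and> t \<in> Sg \<and> s \<in> Sg \<and> i \<noteq> j}"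
definition R3b :: "nat \<Rightarrow> relation set" where
  "R3b n = {([(i,t),(j,s),(i,t)], Psi n - {[(i,t),(i,t)]}) | i t j s.
     i \<in> {1..n} \<and> j \<in> {1..n} \<and> t \<in> Sg \<and> s \<in> Sg \<and> i \<noteq> j}"
definition R4a :: "nat \<Rightarrow> relation set" where
  "R4a n = {([(i,t),(j,s),(i,-t)], Psi n - S2 n j s i (-t)) | i t j s.
     i \<in> {1..n} \<and> j \<in> {1..n} \<and> t \<in> Sg \<and> s \<in> Sg \<and> i \<noteq> j}"
definition R4b :: "nat \<Rightarrow> relation set" where
  "R4b n = {([(i,t),(j,s),(i,-t)], S1 n i t) | i t j s.
     i \<in> {1..n} \<and> j \<in> {1..n} \<and> t \<in> Sg \<and> s \<in> Sg \<and> i \<noteq> j}"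
definition R5a :: "nat \<Rightarrow> relation set" where
  "R5a n = {([(i,t),(j,s),(k,p)], Psi n - S2 n j s k p) | i t j s k p.
     i \<in> {1..n} \<and> j \<in> {1..n} \<and> k \<in> {1..n} \<and> t \<in> Sg \<and> s \<in> Sg \<and> p \<in> Sg
     \<and> i \<noteq> j \<and> j \<noteq> k \<and> i \<noteq> k}"
definition R5b :: "nat \<Rightarrow> relation set" where
  "R5b n = {([(i,t),(j,s),(k,p)], Psi n - S2 n i t k p) | i t j s k p.
     i \<in> {1..n} \<and> j \<in> {1..n} \<and> k \<in> {1..n} \<and> t \<in> Sg \<and> s \<in> Sg \<and> p \<in> Sg
     \<and> i \<noteq> j \<and> j \<noteq> k \<and> i \<noteq> k}"

definition RG :: "nat \<Rightarrow> relation set" where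
  "RG n = R1a n \<union> R1b n \<union> R2a n \<union> R2b n \<union> R3a n \<union> R3b n \<union> R4a n \<union> R4b n \<union> R5a n \<union> R5b n"
definition RF :: "nat \<Rightarrow> relation set" where
  "RF n = R1a n \<union> R2b n \<union> R3a n \<union> R4b n \<union> R5a n"

definition Delta :: "nat \<Rightarrow> (word \<Rightarrow> real) set" where
  "Delta n = {x. (\<forall>\<psi>\<in>Psi n. x \<psi> > 0) \<and> (\<forall>\<psi>. \<psi> \<notin> Psi n \<longrightarrow> x \<psi> = 0)
                \<and> (\<Sum>\<psi>\<in>Psi n. x \<psi>) = 1}"

definition frel :: "relation \<Rightarrow> (word \<Rightarrow> real) \<Rightarrow> real" where
  "frel r x = (let xr = x (fst r); Xr = (\<Sum>\<psi>\<in>snd r. x \<psi>)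
               in ((1 - xr) / xr) * ((1 - Xr) / Xr))"

definition Ffun :: "nat \<Rightarrow> (word \<Rightarrow> real) \<Rightarrow> real" where
  "Ffun n x = Max ((\<lambda>r. frel r x) ` RF n)"
definition Gfun :: "nat \<Rightarrow> (word \<Rightarrow> real) \<Rightarrow> real" where
  "Gfun n x = Max ((\<lambda>r. frel r x) ` RG n)"

definition Ppoly :: "nat \<Rightarrow> real \<Rightarrow> real" where
  "Ppoly n' l = (let n = real n' in
      (8*n^3 - 12*n^2 + 2*n + 1) * l^4
    + (-64*n^6 + 192*n^5 - 192*n^4 + 64*n^3 + 4*n^2 + 2*n - 4) * l^3
    + (-96*n^5 + 224*n^4 - 168*n^3 + 52*n^2 - 18*n + 6) * l^2
    + (32*n^5 - 112*n^4 + 128*n^3 - 68*n^2 + 22*n - 4) * l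
    + (16*n^4 - 32*n^3 + 24*n^2 - 8*n + 1))"

definition alpha :: "nat \<Rightarrow> real" where
  "alpha n = (THE l. l > (2 * real n - 1)^2 \<and> Ppoly n l = 0)"

end

theory Submission
  imports Defs
begin

text \<open>
  If every f_r with r in F is at most \<beta>, each such relation reads
  (1 - x_r)(1 - X_r) \<le> \<beta> x_r X_r, i.e. X_r \<ge> (1 - x_r) / (1 + (\<beta> - 1) x_r), a convex
  function of x_r. Averaging the relations of types 1a, 4b and 2b/3a/5a over their symmetry
  classes therefore yields the same inequalities for the class averages A, C and B of the
  weights of types 1, 4 and 2/3/5, which satisfy 2nA + 8n(n-1)^2 B + 4n(n-1) C = 1.
  For any root l > (2n - 1)^2 of P this three-variable system admits \<beta> \<le> l only when \<beta> = l
  and (A, B, C) = (a*, b*, c*); hence inf F \<ge> l. Conversely, at the point that takes the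
  values a*, b*, c* on the three classes every f_r with r in G is at most l. So
  inf F = inf G = l, the root is unique (it is \<alpha>_n), and a minimiser of F that is constant
  on the classes has class averages, hence values, a*, b*, c*.
\<close>

section \<open>The quartic and the three-class optimisation problem\<close>

definition Preal :: "real \<Rightarrow> real \<Rightarrow> real" where
  "Preal n l = (8*n^3 - 12*n^2 + 2*n + 1) * l^4
    + (-64*n^6 + 192*n^5 - 192*n^4 + 64*n^3 + 4*n^2 + 2*n - 4) * l^3
    + (-96*n^5 + 224*n^4 - 168*n^3 + 52*n^2 - 18*n + 6) * l^2
    + (32*n^5 - 112*n^4 + 128*n^3 - 68*n^2 + 22*n - 4) * l
    + (16*n^4 - 32*n^3 + 24*n^2 - 8*n + 1)"

lemma Ppoly_eq_Preal: "Ppoly n l = Preal (real n) l"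
  by (simp add: Ppoly_def Preal_def Let_def)

definition b_denom :: "real \<Rightarrow> real \<Rightarrow> real" where
  "b_denom n l = (4 * n^2 - 4 * n - 1) * (2 * n - 1) * l^2 + 2 * (2 * n^2 - 1) * l - (2 * n - 1)"

definition a_opt :: "real \<Rightarrow> real \<Rightarrow> real" where
  "a_opt n l = 1 / ((2 * n - 1) * l + 1)"

definition b_opt :: "real \<Rightarrow> real \<Rightarrow> real" where
  "b_opt n l = (2 * n - 1) * (l - 1) / b_denom n l"

definition c_opt :: "real \<Rightarrow> real \<Rightarrow> real" where
  "c_opt n l = (2 * n - 1) / (2 * n - 1 + l)"

text \<open>This is where the quartic comes from: with denominators cleared, the mass constraint
  and the balance equation of class 2/3/5 at the optimal values are multiples of it.\<close>

lemma opt_mass_identity: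
  fixes n l :: real
  shows "2*n * (2*n-1+l) * b_denom n l
       + 8*n*(n-1)^2 * ((2*n-1)*(l-1)) * ((2*n-1)*l+1) * (2*n-1+l)
       + 4*n*(n-1)*(2*n-1) * ((2*n-1)*l+1) * b_denom n l
       - ((2*n-1)*l+1) * (2*n-1+l) * b_denom n l = - (2*n-1) * Preal n l"
  unfolding b_denom_def Preal_def by algebra

lemma opt_balance_identity:
  fixes n l :: real
  shows "(b_denom n l - (2*n-1)*(l-1))
         * ((2*n-2)*((2*n-1)*(l-1))*(2*n-1+l) + (2*n-1)*b_denom n l)
     - l*((2*n-1)*(l-1)) * (b_denom n l*(2*n-1+l)
         - ((2*n-2)*((2*n-1)*(l-1))*(2*n-1+l) + (2*n-1)*b_denom n l))
     = - l * (2*n-1) * Preal n l"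
  unfolding b_denom_def Preal_def by algebra

lemma b_denom_ge:
  fixes n l :: real
  assumes "n \<ge> 2" and "l \<ge> 1"
  shows "b_denom n l \<ge> (4 * n^2 - 4 * n - 1) * (2 * n - 1) * l^2"
proof -
  have "n * n \<ge> 2 * n" using assms by (simp add: mult_right_mono)
  then have "4*n^2 - 2*n - 1 \<ge> 0" using assms unfolding power2_eq_square by linarith
  then have "(4*n^2 - 2*n - 1) * l \<ge> 0" using assms by simp
  moreover have "(2*n - 1) * (l - 1) \<ge> 0" using assms by simp
  moreover have "b_denom n l = (4 * n^2 - 4 * n - 1) * (2 * n - 1) * l^2
      + ((4*n^2 - 2*n - 1) * l + (2*n - 1) * (l - 1))"
    unfolding b_denom_def by algebra
  ultimately show ?thesis by linarith
qed

lemma quadratic_coeff_ge_7: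
  fixes n :: real
  assumes "n \<ge> 2"
  shows "4 * n^2 - 4 * n - 1 \<ge> 7"
proof -
  have "n * n \<ge> 2 * n" using assms by (simp add: mult_right_mono)
  then show ?thesis using assms unfolding power2_eq_square by linarith
qed

lemma opt_basics:
  fixes n l :: real
  assumes n: "n \<ge> 2" and l: "l > (2*n-1)^2"
  shows "l > 9" "l \<ge> 2*n-1" "b_denom n l > 0"
    "0 < a_opt n l" "a_opt n l < 1" "0 < b_opt n l" "0 < c_opt n l" "c_opt n l < 1"
proof -
  have N3: "2*n-1 \<ge> 3" using n by simp
  have "(2*n-1)^2 \<ge> 3^2" using N3 by (intro power_mono) auto
  then show l9: "l > 9" using l by simp
  have "(2*n-1)^2 \<ge> 2*n-1" using N3 by (simp add: power2_eq_square)
  then show "l \<ge> 2*n-1" using l by simp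
  have "(4 * n^2 - 4 * n - 1) * (2 * n - 1) * l^2 > 0"
    using quadratic_coeff_ge_7[OF n] N3 l9 by simp
  then show D: "b_denom n l > 0" using b_denom_ge[OF n, of l] l9 by linarith
  have Nl: "(2*n-1)*l > 0" using N3 l9 by simp
  then show "0 < a_opt n l" "a_opt n l < 1" unfolding a_opt_def by (simp_all add: field_simps)
  show "0 < b_opt n l" unfolding b_opt_def using N3 l9 D by simp
  show "0 < c_opt n l" "c_opt n l < 1" unfolding c_opt_def using N3 l9 by (simp_all add: field_simps)
qed

lemma opt_mass:
  fixes n l :: real
  assumes n: "n \<ge> 2" and l: "l > (2*n-1)^2" and P: "Preal n l = 0"
  shows "2*n * a_opt n l + 8*n*(n-1)^2 * b_opt n l + 4*n*(n-1) * c_opt n l = 1"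
proof -
  note basics = opt_basics[OF n l]
  define D where "D = b_denom n l"
  have Da: "(2*n-1)*l + 1 > 0" and Dc: "2*n-1+l > 0" and Dp: "D > 0"
    using basics n unfolding D_def by (auto intro!: add_pos_pos mult_pos_pos)
  have clear: "(m*(1/Ea) + k1*(u/E) + k2*(v/Ec) - 1) * (Ea*Ec*E)
      = m*Ec*E + k1*u*Ea*Ec + k2*v*Ea*E - Ea*Ec*E"
    if "Ea \<noteq> 0" "Ec \<noteq> 0" "E \<noteq> 0" for m k1 k2 u v Ea Ec E :: real
    using that by (simp add: field_simps)
  have "(2*n * a_opt n l + 8*n*(n-1)^2 * b_opt n l + 4*n*(n-1) * c_opt n l - 1)
        * (((2*n-1)*l+1) * (2*n-1+l) * D)
      = 2*n * (2*n-1+l) * D + 8*n*(n-1)^2 * ((2*n-1)*(l-1)) * ((2*n-1)*l+1) * (2*n-1+l)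
        + 4*n*(n-1)*(2*n-1) * ((2*n-1)*l+1) * D - ((2*n-1)*l+1) * (2*n-1+l) * D"
    unfolding a_opt_def b_opt_def c_opt_def D_def[symmetric]
    by (rule clear) (use Da Dc Dp in auto)
  also have "\<dots> = - (2*n-1) * Preal n l" unfolding D_def by (rule opt_mass_identity)
  finally show ?thesis using Da Dc Dp P by simp
qed

lemma opt_balance:
  fixes n l :: real
  assumes n: "n \<ge> 2" and l: "l > (2*n-1)^2" and P: "Preal n l = 0"
  defines "S \<equiv> (2*n-2) * b_opt n l + c_opt n l"
  shows "(1 - b_opt n l) * S = l * b_opt n l * (1 - S)"
proof -
  note basics = opt_basics[OF n l]
  define D where "D = b_denom n l"
  have Dc: "2*n-1+l > 0" and Dp: "D > 0" using basics n unfolding D_def by auto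
  have clear: "((1-u/E)*(k*(u/E)+v/Ec) - l*(u/E)*(1-(k*(u/E)+v/Ec))) * (E*E*Ec)
     = (E-u)*(k*u*Ec + v*E) - l*u*(E*Ec - (k*u*Ec + v*E))"
    if "Ec \<noteq> 0" "E \<noteq> 0" for k u v Ec E :: real
    using that by (simp add: field_simps)
  have "((1 - b_opt n l) * S - l * b_opt n l * (1 - S)) * (D*D*(2*n-1+l))
      = (D - (2*n-1)*(l-1)) * ((2*n-2)*((2*n-1)*(l-1))*(2*n-1+l) + (2*n-1)*D)
        - l*((2*n-1)*(l-1)) * (D*(2*n-1+l) - ((2*n-2)*((2*n-1)*(l-1))*(2*n-1+l) + (2*n-1)*D))"
    unfolding S_def b_opt_def c_opt_def D_def[symmetric]
    by (rule clear) (use Dc Dp in auto)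
  also have "\<dots> = - l * (2*n-1) * Preal n l" unfolding D_def by (rule opt_balance_identity)
  finally show ?thesis using Dc Dp P by simp
qed

lemma c_opt_gt_b_opt_sq:
  fixes n l :: real
  assumes n: "n \<ge> 2" and l: "l > (2*n-1)^2"
  shows "(2*n-2) * (l-1) * (b_opt n l)^2 < c_opt n l"
proof -
  note basics = opt_basics[OF n l]
  define K where "K = 4 * n^2 - 4 * n - 1"
  define N where "N = 2*n-1"
  define D where "D = b_denom n l"
  have K7: "K \<ge> 7" using quadratic_coeff_ge_7[OF n] K_def by simp
  have N3: "N \<ge> 3" using n N_def by simp
  have l9: "l > 9" and lN: "l \<ge> N" and Dp: "D > 0" using basics unfolding N_def D_def by auto
  have "K * N * l^2 \<le> D" using b_denom_ge[OF n, of l] l9 unfolding K_def N_def D_def by simp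
  moreover have KNl: "K * N * l^2 > 0" using K7 N3 l9 by simp
  ultimately have D2: "(K * N * l^2)^2 \<le> D^2" by (intro power_mono) auto
  have "(2*n-2)*N*(l-1)^3*(N+l) \<le> (2*n-2)*N*l^3*(2*l)"
    using l9 lN N3 n by (intro mult_mono power_mono) auto
  also have "\<dots> < (K * N * l^2)^2"
  proof -
    have "K*K \<ge> 7*7" using K7 by (intro mult_mono) auto
    then have "K*K*N \<ge> 49 * N" using N3 by (intro mult_right_mono) auto
    then have "(2*n-2)*2 < K*K*N" using N_def n by simp
    then have "((2*n-2)*2) * (N * l^4) < (K*K*N) * (N*l^4)" using N3 l9
      by (intro mult_strict_right_mono) auto
    then show ?thesis
      by (simp add: power2_eq_square power3_eq_cube power4_eq_xxxx algebra_simps)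
  qed
  finally have key: "(2*n-2)*N*(l-1)^3*(N+l) < D^2" using D2 by linarith
  have "(2*n-2)*(l-1)*(N*(l-1)/D)^2 = ((2*n-2)*N*(l-1)^3*(N+l)) * N / (D^2 * (N+l))"
    using N3 l9 Dp by (simp add: power_divide power2_eq_square power3_eq_cube)
  also have "\<dots> < D^2 * N / (D^2 * (N+l))"
    using key N3 l9 Dp by (intro divide_strict_right_mono mult_strict_right_mono) auto
  also have "\<dots> = N / (N+l)" using Dp by simp
  finally show ?thesis unfolding b_opt_def c_opt_def N_def D_def by simp
qed

text \<open>The defect E of the balance equation at (B, c) satisfies
  E b = (b - B)(c - k(l - 1) b B), and the second factor is positive because B \<le> b and
  c > k(l - 1) b^2; this pins down B, and then C.\<close>

lemma class235_forces_opt: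
  fixes k l b c B C :: real
  assumes k: "k > 0" and l: "l \<ge> 1" and B: "B > 0" and b: "0 < b" "b < 1"
    and Cc: "c \<le> C" and S_le: "k*B + C \<le> k*b + c" and S_lt: "k*b + c < 1"
    and balance: "(1 - b) * (k*b + c) = l * b * (1 - (k*b + c))"
    and c_large: "k*(l-1)*b^2 < c"
    and ineq: "(1 - B) * (k*B + C) \<le> l * B * (1 - (k*B + C))"
  shows "B = b \<and> C = c"
proof -
  define S where "S = k*B + C"
  define Sc where "Sc = k*B + c"
  define E where "E = (1 - B) * Sc - l * B * (1 - Sc)"
  have "k*B \<le> k*b" using S_le Cc by linarith
  then have Bb: "B \<le> b" using k by simp
  have ScS: "Sc \<le> S" using Cc unfolding Sc_def S_def by simp
  have pos1: "1 - B + l * B > 0" using Bb b B l by (smt (verit) mult_nonneg_nonneg)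
  have "E = (1 - B) * S - l * B * (1 - S) - (S - Sc) * (1 - B + l * B)"
    unfolding E_def by (simp add: algebra_simps)
  then have Ele: "E \<le> - ((S - Sc) * (1 - B + l * B))" using ineq unfolding S_def by linarith
  have "E * b - (b - B) * (c - k*(l-1)*b*B)
      = B * ((1 - b) * (k * b + c) - l * b * (1 - (k * b + c)))"
    unfolding E_def Sc_def by algebra
  then have Eid: "E * b = (b - B) * (c - k*(l-1)*b*B)" using balance by simp
  have "k*(l-1)*b*B \<le> k*(l-1)*b*b" using Bb k l b by (intro mult_left_mono) auto
  then have posc: "c - k*(l-1)*b*B > 0" using c_large by (simp add: power2_eq_square)
  have "(S - Sc) * (1 - B + l * B) \<ge> 0" using ScS pos1 by simp
  then have "E * b \<le> 0" using Ele b by (smt (verit) mult_nonneg_nonneg mult_nonpos_nonneg)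
  then have "(b - B) * (c - k*(l-1)*b*B) \<le> 0" using Eid by simp
  then have "b - B \<le> 0" using posc by (smt (verit) mult_pos_pos)
  then have Beq: "B = b" using Bb by simp
  then have "E = 0" using Eid b by simp
  then have "(S - Sc) * (1 - B + l * B) \<le> 0" using Ele by simp
  then have "S - Sc \<le> 0" using pos1 by (smt (verit) mult_pos_pos)
  then show ?thesis using Beq ScS unfolding S_def Sc_def by simp
qed

lemma a_opt_le:
  fixes n l A \<beta> :: real
  assumes n: "n \<ge> 2" and l: "l > (2*n-1)^2" and A: "A > 0"
    and ineq1: "1 - A \<le> \<beta> * A * (2*n-1)" and \<beta>l: "\<beta> \<le> l"
  shows "a_opt n l \<le> A"
proof -
  have Nl: "(2*n-1)*l + 1 > 0" using opt_basics[OF n l] n by (simp add: add_pos_pos)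
  have "\<beta> * A * (2*n-1) \<le> l * A * (2*n-1)" using \<beta>l A n by (intro mult_right_mono) auto
  then have "1 \<le> A * ((2*n-1)*l + 1)" using ineq1 by (simp add: algebra_simps)
  then show ?thesis using Nl unfolding a_opt_def by (simp add: divide_le_eq mult.commute)
qed

lemma c_opt_le:
  fixes n l C \<beta> :: real
  assumes n: "n \<ge> 2" and l: "l > (2*n-1)^2" and C: "C > 0"
    and ineq4: "(1 - C) * (2*n-1) \<le> \<beta> * C" and \<beta>l: "\<beta> \<le> l"
  shows "c_opt n l \<le> C"
proof -
  have Nl: "2*n-1+l > 0" using opt_basics[OF n l] n by simp
  have "\<beta> * C \<le> l * C" using \<beta>l C by (intro mult_right_mono) auto
  then have "2*n-1 \<le> C * (2*n-1+l)" using ineq4 by (simp add: algebra_simps)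
  then show ?thesis using Nl unfolding c_opt_def by (simp add: divide_le_eq mult.commute)
qed

lemma scalar_constraints_force_opt:
  fixes n l A B C \<beta> :: real
  assumes n: "n \<ge> 2" and l: "l > (2*n-1)^2" and P: "Preal n l = 0"
    and pos: "A > 0" "B > 0" "C > 0"
    and mass: "2*n*A + 8*n*(n-1)^2*B + 4*n*(n-1)*C = 1"
    and ineq1: "1 - A \<le> \<beta> * A * (2*n-1)"
    and ineq4: "(1 - C) * (2*n-1) \<le> \<beta> * C"
    and ineq235: "(1 - B) * ((2*n-2)*B + C) \<le> \<beta> * B * (1 - ((2*n-2)*B + C))"
    and \<beta>l: "\<beta> \<le> l"
  shows "A = a_opt n l \<and> B = b_opt n l \<and> C = c_opt n l \<and> \<beta> = l"
proof -
  define a b c where "a = a_opt n l" and "b = b_opt n l" and "c = c_opt n l"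
  define k m where "k = 2*n-2" and "m = 4*n*(n-1)"
  note basics = opt_basics[OF n l, folded a_def b_def c_def]
  have k2: "k \<ge> 2" using n k_def by auto
  have "n*(n-1) \<ge> 2*1" using n by (intro mult_mono) auto
  then have m8: "m \<ge> 8" using m_def by simp
  have split_mass: "8*n*(n-1)^2*y + 4*n*(n-1)*z = m*(k*y + z)" for y z :: real
    unfolding m_def k_def by algebra
  have mass_opt: "2*n*a + m*(k*b + c) = 1"
    using opt_mass[OF n l P, folded a_def b_def c_def] split_mass[of b c] by linarith
  have mass_ABC: "2*n*A + m*(k*B + C) = 1" using mass split_mass[of B C] by linarith
  have Aa: "a \<le> A" using a_opt_le[OF n l pos(1) ineq1 \<beta>l] a_def by simp
  have Cc: "c \<le> C" using c_opt_le[OF n l pos(3) ineq4 \<beta>l] c_def by simp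
  have "m*(k*B + C) \<le> m*(k*b + c)" using mass_opt mass_ABC Aa n by (smt (verit) mult_left_mono)
  then have S_le: "k*B + C \<le> k*b + c" using m8 by simp
  have "m*(k*b + c) < 1" using mass_opt basics n by (smt (verit) mult_pos_pos)
  then have S_lt: "k*b + c < 1" using m8 mult_left_mono[of 1 "k*b + c" m] by linarith
  then have b1: "b < 1" using k2 basics by (smt (verit) mult_le_cancel_right1)
  have "\<beta> * B * (1 - (k*B + C)) \<le> l * B * (1 - (k*B + C))"
    using \<beta>l pos S_le S_lt by (intro mult_right_mono) auto
  then have ineq_l: "(1 - B) * (k*B + C) \<le> l * B * (1 - (k*B + C))"
    using ineq235 unfolding k_def by linarith
  have BC: "B = b \<and> C = c"
    using class235_forces_opt[OF _ _ pos(2) _ b1 Cc S_le S_lt _ _ ineq_l] k2 basics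
      opt_balance[OF n l P, folded b_def c_def k_def]
      c_opt_gt_b_opt_sq[OF n l, folded b_def c_def k_def]
    by simp
  then have "2*n*A = 2*n*a" using mass_opt mass_ABC by (simp only:)
  then have Aeq: "A = a" using n by simp
  have "1 - a = l * a * (2*n-1)"
    using basics n unfolding a_def a_opt_def by (simp add: field_simps)
  then have "l * a * (2*n-1) \<le> \<beta> * a * (2*n-1)" using ineq1 Aeq by simp
  then have "l \<le> \<beta>" using basics n by simp
  then show ?thesis using BC Aeq \<beta>l a_def b_def c_def by simp
qed

lemma Preal_at_lower_neg:
  fixes m :: real
  assumes "m \<ge> 0"
  shows "Preal (m+2) ((2*(m+2)-1)^2) < 0"
proof -
  have "Preal (m+2) ((2*(m+2)-1)^2) = - (276480 + 2377728*m + 9354240*m^2 + 22255616*m^3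
    + 35652480*m^4 + 40494464*m^5 + 33421184*m^6 + 20184192*m^7 + 8848128*m^8 + 2744320*m^9
    + 571392*m^10 + 71680*m^11 + 4096*m^12)"
    unfolding Preal_def by algebra
  moreover have pw: "0 \<le> m^i" for i :: nat using assms by simp
  ultimately show ?thesis
    using assms pw[of 2] pw[of 3] pw[of 4] pw[of 5] pw[of 6] pw[of 7] pw[of 8]
      pw[of 9] pw[of 10] pw[of 11] pw[of 12] by linarith
qed

lemma Preal_at_upper_pos:
  fixes m :: real
  assumes "m \<ge> 0"
  shows "Preal (m+2) (8*(m+2)^3) > 0"
proof -
  have "Preal (m+2) (8*(m+2)^3) = 219620945 + 1750829912*m + 6425251480*m^2
    + 14402822336*m^3 + 22050518400*m^4 + 24408121312*m^5 + 20156380544*m^6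
    + 12621428736*m^7 + 6024542720*m^8 + 2182266368*m^9 + 590699520*m^10 + 115896320*m^11
    + 15585280*m^12 + 1286144*m^13 + 49152*m^14"
    unfolding Preal_def by algebra
  moreover have pw: "0 \<le> m^i" for i :: nat using assms by simp
  ultimately show ?thesis
    using assms pw[of 2] pw[of 3] pw[of 4] pw[of 5] pw[of 6] pw[of 7] pw[of 8]
      pw[of 9] pw[of 10] pw[of 11] pw[of 12] pw[of 13] pw[of 14] by linarith
qed

lemma Preal_root_exists:
  fixes n :: real
  assumes n: "n \<ge> 2"
  shows "\<exists>l. l > (2*n-1)^2 \<and> Preal n l = 0"
proof -
  have lo: "Preal n ((2*n-1)^2) < 0" using Preal_at_lower_neg[of "n-2"] n by simp
  have hi: "Preal n (8*n^3) > 0" using Preal_at_upper_pos[of "n-2"] n by simp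
  have "(2*n-1)^2 \<le> (2*n)^2" using n by (intro power_mono) auto
  also have "\<dots> \<le> 8*n^3" using n by (simp add: power2_eq_square power3_eq_cube)
  finally have le: "(2*n-1)^2 \<le> 8*n^3" .
  have "continuous_on {(2*n-1)^2..8*n^3} (Preal n)" unfolding Preal_def
    by (intro continuous_intros)
  then obtain l where "(2*n-1)^2 \<le> l" "Preal n l = 0"
    using IVT'[of "Preal n" "(2*n-1)^2" 0 "8*n^3"] lo hi le by auto
  moreover have "l \<noteq> (2*n-1)^2" using calculation lo by auto
  ultimately show ?thesis by (intro exI[of _ l]) auto
qed

section \<open>Counting the words of Psi\<close>

definition letters :: "nat \<Rightarrow> letter set" where
  "letters n = {1..n} \<times> Sg"

definition letters_avoiding :: "nat \<Rightarrow> letter \<Rightarrow> letter set" where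
  "letters_avoiding n a = {b \<in> letters n. fst b \<noteq> fst a}"

definition letters_avoiding2 :: "nat \<Rightarrow> letter \<Rightarrow> letter \<Rightarrow> letter set" where
  "letters_avoiding2 n a b = {c \<in> letters n. fst c \<noteq> fst a \<and> fst c \<noteq> fst b}"

definition pairs :: "nat \<Rightarrow> (letter \<times> letter) set" where
  "pairs n = Sigma (letters n) (letters_avoiding n)"

definition triples :: "nat \<Rightarrow> ((letter \<times> letter) \<times> letter) set" where
  "triples n = Sigma (pairs n) (\<lambda>p. letters_avoiding2 n (fst p) (snd p))"

definition letter_inv :: "letter \<Rightarrow> letter" where
  "letter_inv a = (fst a, - snd a)"

definition S_letter :: "nat \<Rightarrow> letter \<Rightarrow> word set" where
  "S_letter n a = S1 n (fst a) (snd a)"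

definition S_pair :: "nat \<Rightarrow> letter \<Rightarrow> letter \<Rightarrow> word set" where
  "S_pair n a b = S2 n (fst a) (snd a) (fst b) (snd b)"

lemma Sg_simps: "finite Sg" "card Sg = 2" "t \<in> Sg \<Longrightarrow> -t \<in> Sg" "t \<in> Sg \<Longrightarrow> -t \<noteq> t"
  by (auto simp: Sg_def)

lemma letters_mem: "a \<in> letters n \<longleftrightarrow> fst a \<in> {1..n} \<and> snd a \<in> Sg"
  by (cases a) (auto simp: letters_def)

lemma pairs_mem: "(a, b) \<in> pairs n \<longleftrightarrow> a \<in> letters n \<and> b \<in> letters n \<and> fst a \<noteq> fst b"
  by (auto simp: pairs_def letters_avoiding_def)

lemma triples_mem:
  "((a, b), c) \<in> triples n \<longleftrightarrow> (a, b) \<in> pairs n \<and> c \<in> letters n \<and> fst c \<noteq> fst a \<and> fst c \<noteq> fst b"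
  by (auto simp: triples_def letters_avoiding2_def)

lemma letter_inv_simps:
  "fst (letter_inv a) = fst a" "a \<in> letters n \<Longrightarrow> letter_inv a \<in> letters n"
  "a \<in> letters n \<Longrightarrow> letter_inv a \<noteq> a"
  by (cases a; auto simp: letter_inv_def letters_mem Sg_def)+

lemma finite_letters: "finite (letters n)"
  and finite_letters_avoiding: "finite (letters_avoiding n a)"
  and finite_letters_avoiding2: "finite (letters_avoiding2 n a b)"
  and finite_pairs: "finite (pairs n)"
  and finite_triples: "finite (triples n)"
  by (auto simp: letters_def Sg_simps letters_avoiding_def letters_avoiding2_def pairs_def
      triples_def intro!: finite_SigmaI)

lemma card_letters: "card (letters n) = 2*n"
  by (simp add: letters_def Sg_simps card_cartesian_product)

lemma card_letters_avoiding: "fst a \<in> {1..n} \<Longrightarrow> card (letters_avoiding n a) = 2*(n-1)"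
proof -
  have "letters_avoiding n a = ({1..n} - {fst a}) \<times> Sg"
    by (auto simp: letters_avoiding_def letters_def)
  then show "fst a \<in> {1..n} \<Longrightarrow> ?thesis" by (simp add: card_cartesian_product Sg_simps)
qed

lemma card_letters_avoiding2:
  assumes "(a, b) \<in> pairs n"
  shows "card (letters_avoiding2 n a b) = 2*(n-2)"
proof -
  have "letters_avoiding2 n a b = ({1..n} - {fst a, fst b}) \<times> Sg"
    by (auto simp: letters_avoiding2_def letters_def)
  then show ?thesis
    using assms by (simp add: card_cartesian_product Sg_simps card_Diff_subset pairs_mem letters_mem)
qed

lemma card_pairs: "card (pairs n) = 4*n*(n-1)"
proof -
  have "card (pairs n) = (\<Sum>a\<in>letters n. card (letters_avoiding n a))" unfolding pairs_def
    by (rule card_SigmaI) (auto simp: finite_letters finite_letters_avoiding)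
  also have "\<dots> = (\<Sum>a\<in>letters n. 2*(n-1))"
    by (intro sum.cong) (auto simp: card_letters_avoiding letters_mem)
  finally show ?thesis by (simp add: card_letters)
qed

lemma card_triples: "card (triples n) = 4*n*(n-1)*(2*(n-2))"
proof -
  have "card (triples n) = (\<Sum>p\<in>pairs n. card (letters_avoiding2 n (fst p) (snd p)))"
    unfolding triples_def by (rule card_SigmaI) (auto simp: finite_pairs finite_letters_avoiding2)
  also have "\<dots> = (\<Sum>p\<in>pairs n. 2*(n-2))"
    by (intro sum.cong) (auto simp: card_letters_avoiding2)
  finally show ?thesis by (simp add: card_pairs)
qed

lemma Psi_cases:
  assumes "w \<in> Psi n"
  shows "(\<exists>a\<in>letters n. w = [a,a]) \<or> (\<exists>a b. (a, b) \<in> pairs n \<and> w = [a,b,b])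
    \<or> (\<exists>a b c. (a, b) \<in> pairs n \<and> c \<in> letters n \<and> fst c \<noteq> fst b \<and> w = [a,b,c])"
  using assms unfolding Psi_def by (auto simp: pairs_mem letters_mem)

lemma Psi_aa: "a \<in> letters n \<Longrightarrow> [a,a] \<in> Psi n"
  by (cases a) (auto simp: Psi_def letters_def)

lemma Psi_abb: "(a, b) \<in> pairs n \<Longrightarrow> [a,b,b] \<in> Psi n"
  by (cases a, cases b) (auto simp: Psi_def pairs_mem letters_mem)

lemma Psi_abc: "(a, b) \<in> pairs n \<Longrightarrow> c \<in> letters n \<Longrightarrow> fst c \<noteq> fst b \<Longrightarrow> [a,b,c] \<in> Psi n"
  by (cases a, cases b, cases c) (auto simp: Psi_def pairs_mem letters_mem)

lemma finite_Psi: "finite (Psi n)"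
proof (rule finite_subset)
  show "Psi n \<subseteq> {w. set w \<subseteq> letters n \<and> length w \<le> 3}"
    using Psi_cases by (fastforce simp: pairs_mem)
  show "finite {w. set w \<subseteq> letters n \<and> length w \<le> 3}"
    by (rule finite_lists_length_le) (rule finite_letters)
qed

lemma S_letter_mem: "w \<in> S_letter n a \<longleftrightarrow> w \<in> Psi n \<and> w \<noteq> [] \<and> hd w = a"
  by (cases a) (auto simp: S_letter_def S1_def)

lemma S_letter_subset: "S_letter n a \<subseteq> Psi n"
  by (auto simp: S_letter_mem)

lemma finite_S_letter: "finite (S_letter n a)"
  using finite_subset[OF S_letter_subset finite_Psi] .

lemma S_pair_eq: "S_pair n a b = insert [a,b,b] ((\<lambda>c. [a,b,c]) ` {c \<in> letters n. fst c \<noteq> fst b})"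
  by (cases a, cases b) (auto simp: S_pair_def S2_def letters_mem)

lemma finite_S_pair: "finite (S_pair n a b)"
  unfolding S_pair_eq by (auto simp: finite_letters)

lemma S_pair_form: "w \<in> S_pair n a b \<Longrightarrow> \<exists>c. w = [a,b,c]"
  unfolding S_pair_eq by auto

lemma Psi_hd_letter: "w \<in> Psi n \<Longrightarrow> w \<noteq> [] \<and> hd w \<in> letters n"
  using Psi_cases[of w n] by (auto simp: pairs_mem)

lemma Psi_eq_UN_S_letter: "Psi n = (\<Union>a\<in>letters n. S_letter n a)"
  using Psi_hd_letter by (auto simp: S_letter_mem)

lemma sum_Psi_by_first_letter: "sum x (Psi n) = (\<Sum>a\<in>letters n. sum x (S_letter n a))"
  unfolding Psi_eq_UN_S_letter
  by (rule sum.UNION_disjoint) (auto simp: finite_letters finite_S_letter S_letter_mem)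

lemma S_letter_decomp:
  assumes a: "a \<in> letters n"
  shows "S_letter n a = insert [a,a] (\<Union>b\<in>letters_avoiding n a. S_pair n a b)"
proof (intro equalityI subsetI)
  fix w assume "w \<in> S_letter n a"
  then have w: "w \<in> Psi n" "hd w = a" by (auto simp: S_letter_mem)
  from Psi_cases[OF w(1)] show "w \<in> insert [a,a] (\<Union>b\<in>letters_avoiding n a. S_pair n a b)"
  proof (elim disjE exE conjE bexE)
    fix a' b assume "(a', b) \<in> pairs n" "w = [a',b,b]"
    moreover have "b \<in> letters_avoiding n a" "w \<in> S_pair n a b"
      using calculation w(2) by (auto simp: pairs_mem letters_avoiding_def S_pair_eq)
    ultimately show ?thesis by blast
  next
    fix a' b c assume "(a', b) \<in> pairs n" "c \<in> letters n" "fst c \<noteq> fst b" "w = [a',b,c]"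
    moreover have "b \<in> letters_avoiding n a" "w \<in> S_pair n a b"
      using calculation w(2) by (auto simp: pairs_mem letters_avoiding_def S_pair_eq)
    ultimately show ?thesis by blast
  qed (use w(2) in simp)
next
  fix w assume "w \<in> insert [a,a] (\<Union>b\<in>letters_avoiding n a. S_pair n a b)"
  then consider "w = [a,a]" | b where "(a, b) \<in> pairs n" "w \<in> S_pair n a b"
    using a by (auto simp: pairs_def)
  then show "w \<in> S_letter n a"
  proof cases
    case 2
    then show ?thesis using Psi_abb[OF 2(1)] Psi_abc[OF 2(1)] by (auto simp: S_pair_eq S_letter_mem)
  qed (use Psi_aa[OF a] in \<open>simp add: S_letter_mem\<close>)
qed

lemma S_pair_subset: "(a, b) \<in> pairs n \<Longrightarrow> S_pair n a b \<subseteq> Psi n"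
  using S_letter_decomp[of a n] S_letter_subset[of n a] by (auto simp: pairs_def)

lemma sum_S_letter:
  assumes "a \<in> letters n"
  shows "sum x (S_letter n a) = x [a,a] + (\<Sum>b\<in>letters_avoiding n a. sum x (S_pair n a b))"
proof -
  have "sum x (S_letter n a) = x [a,a] + sum x (\<Union>b\<in>letters_avoiding n a. S_pair n a b)"
    unfolding S_letter_decomp[OF assms]
    by (rule sum.insert) (auto simp: finite_letters_avoiding finite_S_pair dest: S_pair_form)
  also have "sum x (\<Union>b\<in>letters_avoiding n a. S_pair n a b)
      = (\<Sum>b\<in>letters_avoiding n a. sum x (S_pair n a b))"
    by (rule sum.UNION_disjoint) (auto simp: finite_letters_avoiding finite_S_pair dest!: S_pair_form)
  finally show ?thesis .
qed

lemma third_letters_decomp: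
  assumes "(a, b) \<in> pairs n"
  shows "{c \<in> letters n. fst c \<noteq> fst b} = insert a (insert (letter_inv a) (letters_avoiding2 n a b))"
  using assms letter_inv_simps(2,3)[of a n]
  by (cases a) (auto simp: pairs_mem letters_mem letters_avoiding2_def letter_inv_def Sg_def)

lemma sum_S_pair:
  assumes "(a, b) \<in> pairs n"
  shows "sum x (S_pair n a b)
    = x [a,b,b] + x [a,b,a] + x [a,b,letter_inv a] + (\<Sum>c\<in>letters_avoiding2 n a b. x [a,b,c])"
proof -
  have a: "a \<in> letters n" using assms by (simp add: pairs_mem)
  have "sum x (S_pair n a b) = x [a,b,b] + (\<Sum>c\<in>{c \<in> letters n. fst c \<noteq> fst b}. x [a,b,c])"
    unfolding S_pair_eq by (subst sum.insert) (auto simp: finite_letters sum.reindex inj_on_def)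
  also have "(\<Sum>c\<in>{c \<in> letters n. fst c \<noteq> fst b}. x [a,b,c])
      = x [a,b,a] + x [a,b,letter_inv a] + (\<Sum>c\<in>letters_avoiding2 n a b. x [a,b,c])"
  proof -
    have "a \<notin> insert (letter_inv a) (letters_avoiding2 n a b)"
      using letter_inv_simps(3)[OF a] by (auto simp: letters_avoiding2_def)
    moreover have "letter_inv a \<notin> letters_avoiding2 n a b"
      by (simp add: letters_avoiding2_def letter_inv_simps(1))
    ultimately show ?thesis
      unfolding third_letters_decomp[OF assms] by (simp add: finite_letters_avoiding2 add.assoc)
  qed
  finally show ?thesis by (simp add: add.assoc)
qed

lemma sum_pairs_swap: "(\<Sum>(a, b)\<in>pairs n. g b a) = (\<Sum>(a, b)\<in>pairs n. g a b)"
  by (rule sum.reindex_bij_witness[where i="\<lambda>(a, b). (b, a)" and j="\<lambda>(a, b). (b, a)"])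
    (auto simp: pairs_mem)

lemma sum_triples_rotate:
  "(\<Sum>((a, b), c)\<in>triples n. g c a b) = (\<Sum>((a, b), c)\<in>triples n. g a b c)"
  by (rule sum.reindex_bij_witness[where i="\<lambda>((a, b), c). ((b, c), a)"
        and j="\<lambda>((a, b), c). ((c, a), b)"])
    (auto simp: triples_mem pairs_mem)

lemma sum_pairs_fst: "(\<Sum>(a, b)\<in>pairs n. g a) = real (2*(n-1)) * (\<Sum>a\<in>letters n. g a)"
proof -
  have "(\<Sum>(a, b)\<in>pairs n. g a) = (\<Sum>a\<in>letters n. \<Sum>b\<in>letters_avoiding n a. g a)"
    unfolding pairs_def
    by (rule sum.Sigma[symmetric]) (auto simp: finite_letters finite_letters_avoiding)
  also have "\<dots> = (\<Sum>a\<in>letters n. real (2*(n-1)) * g a)"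
    by (intro sum.cong) (auto simp: card_letters_avoiding letters_mem)
  finally show ?thesis by (simp add: sum_distrib_left)
qed

lemma sum_triples_eq_sum_pairs:
  "(\<Sum>((a, b), c)\<in>triples n. g a b c) = (\<Sum>(a, b)\<in>pairs n. \<Sum>c\<in>letters_avoiding2 n a b. g a b c)"
proof -
  have "(\<Sum>((a, b), c)\<in>triples n. g a b c)
      = (\<Sum>p\<in>pairs n. \<Sum>c\<in>letters_avoiding2 n (fst p) (snd p). g (fst p) (snd p) c)"
    unfolding triples_def
    by (subst sum.Sigma) (auto simp: finite_pairs finite_letters_avoiding2 case_prod_beta)
  then show ?thesis by (simp add: case_prod_beta)
qed

lemma sum_triples_fst:
  "(\<Sum>((a, b), c)\<in>triples n. g a b) = real (2*(n-2)) * (\<Sum>(a, b)\<in>pairs n. g a b)"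
  unfolding sum_triples_eq_sum_pairs sum_distrib_left
  by (intro sum.cong) (auto simp: card_letters_avoiding2)

lemma sum_S_letter_split:
  "(\<Sum>a\<in>letters n. sum x (S_letter n a))
    = (\<Sum>a\<in>letters n. x [a,a]) + (\<Sum>(a, b)\<in>pairs n. sum x (S_pair n a b))"
proof -
  have "(\<Sum>a\<in>letters n. sum x (S_letter n a))
      = (\<Sum>a\<in>letters n. x [a,a]) + (\<Sum>a\<in>letters n. \<Sum>b\<in>letters_avoiding n a. sum x (S_pair n a b))"
    by (simp add: sum_S_letter sum.distrib)
  also have "(\<Sum>a\<in>letters n. \<Sum>b\<in>letters_avoiding n a. sum x (S_pair n a b))
      = (\<Sum>(a, b)\<in>pairs n. sum x (S_pair n a b))"
    unfolding pairs_def by (rule sum.Sigma) (auto simp: finite_letters finite_letters_avoiding)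
  finally show ?thesis .
qed

lemma sum_S_pair_split:
  "(\<Sum>(a, b)\<in>pairs n. sum x (S_pair n a b))
    = (\<Sum>(a, b)\<in>pairs n. x [a,b,b]) + (\<Sum>(a, b)\<in>pairs n. x [a,b,a])
      + (\<Sum>(a, b)\<in>pairs n. x [a,b,letter_inv a]) + (\<Sum>((a, b), c)\<in>triples n. x [a,b,c])"
  unfolding sum_triples_eq_sum_pairs
  by (subst sum.cong[OF refl, where h="\<lambda>(a, b). x [a,b,b] + x [a,b,a] + x [a,b,letter_inv a]
        + (\<Sum>c\<in>letters_avoiding2 n a b. x [a,b,c])"])
    (auto simp: sum_S_pair sum.distrib case_prod_beta)

section \<open>The lower bound: averaging over symmetry classes\<close>

lemma Delta_pos: "x \<in> Delta n \<Longrightarrow> w \<in> Psi n \<Longrightarrow> x w > 0"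
  by (simp add: Delta_def)

lemma Delta_sum: "x \<in> Delta n \<Longrightarrow> sum x (Psi n) = 1"
  by (simp add: Delta_def)

lemma Delta_nonneg: "x \<in> Delta n \<Longrightarrow> x w \<ge> 0"
  by (cases "w \<in> Psi n") (auto simp: Delta_def intro: less_imp_le)

lemma sum_pos_of_Delta: "x \<in> Delta n \<Longrightarrow> A \<subseteq> Psi n \<Longrightarrow> w \<in> A \<Longrightarrow> sum x A > 0"
  by (rule sum_pos2[of A w])
    (auto intro: finite_subset[OF _ finite_Psi] Delta_pos Delta_nonneg)

lemma sum_compl_of_Delta: "x \<in> Delta n \<Longrightarrow> A \<subseteq> Psi n \<Longrightarrow> sum x (Psi n - A) = 1 - sum x A"
  by (simp add: sum_diff finite_Psi Delta_sum)

lemma sum_S_letter_total: "x \<in> Delta n \<Longrightarrow> (\<Sum>a\<in>letters n. sum x (S_letter n a)) = 1"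
  using sum_Psi_by_first_letter[of x n] Delta_sum[of x n] by simp

text \<open>The words of types 2, 3 and 5 are indexed by the pair (a, b) for which Psi - S(ab)
  is the X-set of their relation of type 2b, 3a or 5a; sharing X-sets, the three families of
  relations are averaged together.\<close>

definition mean1 :: "nat \<Rightarrow> (word \<Rightarrow> real) \<Rightarrow> real" where
  "mean1 n x = (\<Sum>a\<in>letters n. x [a,a]) / (2 * real n)"

definition mean4 :: "nat \<Rightarrow> (word \<Rightarrow> real) \<Rightarrow> real" where
  "mean4 n x = (\<Sum>(a, b)\<in>pairs n. x [a,b,letter_inv a]) / (4 * real n * (real n - 1))"

definition mean235 :: "nat \<Rightarrow> (word \<Rightarrow> real) \<Rightarrow> real" where
  "mean235 n x = ((\<Sum>(a, b)\<in>pairs n. x [a,b,b]) + (\<Sum>(a, b)\<in>pairs n. x [b,a,b])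
      + (\<Sum>((a, b), c)\<in>triples n. x [c,a,b])) / (8 * real n * (real n - 1)^2)"

lemma real_card_letters_pairs_triples:
  assumes "n \<ge> 2"
  shows "real (card (letters n)) = 2 * real n"
    "real (card (pairs n)) = 4 * real n * (real n - 1)"
    "real (card (triples n)) = 4 * real n * (real n - 1) * (2 * real n - 4)"
    "real (2*(n-1)) = 2 * real n - 2" "real (2*(n-2)) = 2 * real n - 4"
  using assms by (simp_all add: card_letters card_pairs card_triples of_nat_diff)

lemma letters_pairs_nonempty:
  assumes "n \<ge> 2"
  shows "letters n \<noteq> {}" "pairs n \<noteq> {}"
  using real_card_letters_pairs_triples[OF assms] assms by auto

lemma means_mass:
  assumes n: "n \<ge> 2" and x: "x \<in> Delta n"
  shows "2 * real n * mean1 n x + 8 * real n * (real n - 1)^2 * mean235 n x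
      + 4 * real n * (real n - 1) * mean4 n x = 1"
proof -
  have "(\<Sum>(a, b)\<in>pairs n. x [b,a,b]) = (\<Sum>(a, b)\<in>pairs n. x [a,b,a])"
    using sum_pairs_swap[of "\<lambda>a b. x [a,b,a]" n] by simp
  moreover have "(\<Sum>((a, b), c)\<in>triples n. x [c,a,b]) = (\<Sum>((a, b), c)\<in>triples n. x [a,b,c])"
    using sum_triples_rotate[of "\<lambda>a b c. x [a,b,c]" n] by simp
  moreover have "real n - 1 > 0" using n by simp
  ultimately show ?thesis
    using sum_S_letter_total[OF x] sum_S_letter_split[of x n] sum_S_pair_split[of x n] n
    unfolding mean1_def mean4_def mean235_def by simp
qed

lemma means_pos:
  assumes n: "n \<ge> 2" and x: "x \<in> Delta n"
  shows "mean1 n x > 0" "mean235 n x > 0" "mean4 n x > 0"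
proof -
  have xpos: "\<And>w. w \<in> Psi n \<Longrightarrow> x w > 0" using Delta_pos[OF x] .
  note ne = letters_pairs_nonempty[OF n]
  have "(\<Sum>a\<in>letters n. x [a,a]) > 0"
    by (rule sum_pos) (auto simp: finite_letters ne intro: xpos Psi_aa)
  then show "mean1 n x > 0" unfolding mean1_def using n by simp
  have "(\<Sum>(a, b)\<in>pairs n. x [a,b,letter_inv a]) > 0"
    by (rule sum_pos) (auto simp: finite_pairs ne pairs_mem letter_inv_simps intro!: xpos Psi_abc)
  then show "mean4 n x > 0" unfolding mean4_def using n by simp
  have "(\<Sum>(a, b)\<in>pairs n. x [a,b,b]) > 0"
    by (rule sum_pos) (auto simp: finite_pairs ne intro!: xpos Psi_abb)
  moreover have "(\<Sum>(a, b)\<in>pairs n. x [b,a,b]) \<ge> 0" "(\<Sum>((a, b), c)\<in>triples n. x [c,a,b]) \<ge> 0"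
    by (auto intro!: sum_nonneg simp: Delta_nonneg[OF x])
  ultimately show "mean235 n x > 0" unfolding mean235_def using n by simp
qed

text \<open>A bound f_r \<le> \<beta> says exactly that X_r is at least X_bound \<beta> x_r. For \<beta> \<ge> 1 this
  bound is convex in x_r, so its tangent lines let the bound pass to averages over a
  family of relations.\<close>

definition X_bound :: "real \<Rightarrow> real \<Rightarrow> real" where
  "X_bound \<beta> u = (1 - u) / (1 + (\<beta> - 1) * u)"

definition X_bound_deriv :: "real \<Rightarrow> real \<Rightarrow> real" where
  "X_bound_deriv \<beta> u = - \<beta> / (1 + (\<beta> - 1) * u)^2"

lemma product_le_iff_X_bound_le:
  fixes u v \<beta> :: real
  assumes "u > 0" "\<beta> \<ge> 1"
  shows "(1 - u) * (1 - v) \<le> \<beta> * u * v \<longleftrightarrow> X_bound \<beta> u \<le> v"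
proof -
  have "1 + (\<beta> - 1) * u > 0" using assms by (smt (verit) mult_nonneg_nonneg)
  then show ?thesis unfolding X_bound_def by (simp add: divide_le_eq algebra_simps)
qed

lemma X_bound_tangent_le:
  fixes u U \<beta> :: real
  assumes u: "u > 0" and U: "U > 0" and \<beta>: "\<beta> \<ge> 1"
  shows "X_bound \<beta> U + X_bound_deriv \<beta> U * (u - U) \<le> X_bound \<beta> u"
proof -
  define gu gU where "gu = 1 + (\<beta> - 1) * u" and "gU = 1 + (\<beta> - 1) * U"
  have gu: "gu > 0" and gU: "gU > 0"
    using u U \<beta> unfolding gu_def gU_def by (smt (verit) mult_nonneg_nonneg)+
  have "X_bound \<beta> u - (X_bound \<beta> U + X_bound_deriv \<beta> U * (u - U))
      = \<beta> * (\<beta> - 1) * (u - U)^2 / (gu * gU^2)"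
    unfolding X_bound_def X_bound_deriv_def gu_def[symmetric] gU_def[symmetric] using gu gU
    apply (simp add: field_simps power2_eq_square)
    unfolding gu_def gU_def by algebra
  moreover have "\<beta> * (\<beta> - 1) * (u - U)^2 / (gu * gU^2) \<ge> 0" using \<beta> gu gU by simp
  ultimately show ?thesis by linarith
qed

lemma sum_ge_X_bound_tangent:
  fixes u v :: "'i \<Rightarrow> real"
  assumes "finite I" and u: "\<And>i. i \<in> I \<Longrightarrow> u i > 0"
    and uv: "\<And>i. i \<in> I \<Longrightarrow> (1 - u i) * (1 - v i) \<le> \<beta> * u i * v i"
    and \<beta>: "\<beta> \<ge> 1" and U: "U > 0"
  shows "real (card I) * X_bound \<beta> U + X_bound_deriv \<beta> U * (sum u I - real (card I) * U) \<le> sum v I"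
proof -
  have "real (card I) * X_bound \<beta> U + X_bound_deriv \<beta> U * (sum u I - real (card I) * U)
      = (\<Sum>i\<in>I. X_bound \<beta> U + X_bound_deriv \<beta> U * (u i - U))"
    by (simp add: sum.distrib sum_subtractf flip: sum_distrib_left)
  also have "\<dots> \<le> (\<Sum>i\<in>I. X_bound \<beta> (u i))"
    by (intro sum_mono X_bound_tangent_le u U \<beta>)
  also have "\<dots> \<le> sum v I"
    by (intro sum_mono) (use u uv product_le_iff_X_bound_le[OF _ \<beta>] in blast)
  finally show ?thesis .
qed

lemma product_le_average:
  fixes u v :: "'i \<Rightarrow> real"
  assumes "finite I" "I \<noteq> {}" and u: "\<And>i. i \<in> I \<Longrightarrow> u i > 0"
    and uv: "\<And>i. i \<in> I \<Longrightarrow> (1 - u i) * (1 - v i) \<le> \<beta> * u i * v i"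
    and \<beta>: "\<beta> \<ge> 1" and U: "sum u I = real (card I) * U" and V: "sum v I = real (card I) * V"
  shows "(1 - U) * (1 - V) \<le> \<beta> * U * V"
proof -
  have card: "real (card I) > 0" using assms(1,2) by (simp add: card_gt_0_iff)
  have "sum u I > 0" using assms(1,2) u by (intro sum_pos) auto
  then have "U > 0" using U card by (simp add: zero_less_mult_iff)
  with assms(1) u uv \<beta>
  have "real (card I) * X_bound \<beta> U + X_bound_deriv \<beta> U * (sum u I - real (card I) * U) \<le> sum v I"
    by (rule sum_ge_X_bound_tangent)
  then have "real (card I) * X_bound \<beta> U \<le> real (card I) * V" using U V by simp
  then show ?thesis using product_le_iff_X_bound_le[OF \<open>U > 0\<close> \<beta>] card by simp
qed

lemma product_le_of_frel_le:
  assumes "frel r x \<le> \<beta>" "x (fst r) > 0" "sum x (snd r) > 0"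
  shows "(1 - x (fst r)) * (1 - sum x (snd r)) \<le> \<beta> * x (fst r) * sum x (snd r)"
  using assms by (simp add: frel_def Let_def divide_le_eq mult.assoc)

lemma R1a_in_RF: "a \<in> letters n \<Longrightarrow> ([a,a], Psi n - S_letter n a) \<in> RF n"
  by (cases a) (auto simp: RF_def R1a_def S_letter_def letters_def)

lemma R2b_in_RF: "(a, b) \<in> pairs n \<Longrightarrow> ([a,b,b], Psi n - S_pair n a b) \<in> RF n"
  by (cases a, cases b) (auto simp: RF_def R2b_def S_pair_def pairs_mem letters_mem)

lemma R3a_in_RF: "(a, b) \<in> pairs n \<Longrightarrow> ([b,a,b], Psi n - S_pair n a b) \<in> RF n"
  by (cases a, cases b) (auto simp: RF_def R3a_def S_pair_def pairs_mem letters_mem)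

lemma R4b_in_RF: "(a, b) \<in> pairs n \<Longrightarrow> ([a,b,letter_inv a], S_letter n a) \<in> RF n"
  by (cases a, cases b) (auto simp: RF_def R4b_def S_letter_def pairs_mem letters_mem letter_inv_def)

lemma R5a_in_RF: "((a, b), c) \<in> triples n \<Longrightarrow> ([c,a,b], Psi n - S_pair n a b) \<in> RF n"
  by (cases a, cases b, cases c)
    (auto simp: RF_def R5a_def S_pair_def triples_mem pairs_mem letters_mem)

lemma Psi_square: "i \<in> {1..n} \<Longrightarrow> t \<in> Sg \<Longrightarrow> [(i,t),(i,t)] \<in> Psi n"
  by (intro Psi_aa) (simp add: letters_def)

lemma RG_subset: "RG n \<subseteq> Psi n \<times> Pow (Psi n)"
proof -
  have abb: "[(i,t),(j,s),(j,s)] \<in> Psi n"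
    if "i \<in> {1..n}" "t \<in> Sg" "j \<in> {1..n}" "s \<in> Sg" "i \<noteq> j" for i t j s
    using that by (intro Psi_abb) (simp add: pairs_mem letters_def)
  have abc: "[(i,t),(j,s),(k,p)] \<in> Psi n"
    if "i \<in> {1..n}" "t \<in> Sg" "j \<in> {1..n}" "s \<in> Sg" "i \<noteq> j" "k \<in> {1..n}" "p \<in> Sg" "k \<noteq> j"
    for i t j s k p
    using that by (intro Psi_abc) (simp_all add: pairs_mem letters_def)
  have "R1a n \<union> R1b n \<union> R2a n \<union> R2b n \<union> R3a n \<union> R3b n \<subseteq> Psi n \<times> Pow (Psi n)"
    unfolding R1a_def R1b_def R2a_def R2b_def R3a_def R3b_def using Psi_square abb abc by auto
  moreover have "R4a n \<union> R4b n \<union> R5a n \<union> R5b n \<subseteq> Psi n \<times> Pow (Psi n)"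
    unfolding R4a_def R4b_def R5a_def R5b_def S1_def using abc Sg_simps(3) by auto
  ultimately show ?thesis unfolding RG_def by blast
qed

lemma RF_subset_RG: "RF n \<subseteq> RG n"
  unfolding RF_def RG_def by blast

lemma finite_RG: "finite (RG n)"
  by (rule finite_subset[OF RG_subset]) (simp add: finite_Psi)

lemma finite_RF: "finite (RF n)"
  by (rule finite_subset[OF RF_subset_RG finite_RG])

lemma frel_le_Ffun: "r \<in> RF n \<Longrightarrow> frel r x \<le> Ffun n x"
  unfolding Ffun_def by (rule Max_ge) (auto simp: finite_RF)

lemma RF_in_Psi: "r \<in> RF n \<Longrightarrow> fst r \<in> Psi n \<and> snd r \<subseteq> Psi n"
  using RG_subset RF_subset_RG by (fastforce simp: mem_Times_iff)

lemma RF_snd_has_square: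
  assumes "r \<in> RF n"
  shows "\<exists>a\<in>letters n. [a,a] \<in> snd r"
  using assms unfolding RF_def
proof (elim UnE)
  assume "r \<in> R1a n"
  then obtain i t where "r = ([(i,t),(i,t)], Psi n - S1 n i t)" "i \<in> {1..n}" "t \<in> Sg"
    unfolding R1a_def by blast
  then show ?thesis
    using Psi_aa[of "(i, -t)" n] Sg_simps(3,4)[of t]
    by (intro bexI[of _ "(i, -t)"]) (auto simp: S1_def letters_def)
next
  assume "r \<in> R4b n"
  then obtain i t j s where "r = ([(i,t),(j,s),(i,-t)], S1 n i t)" "i \<in> {1..n}" "t \<in> Sg"
    unfolding R4b_def by blast
  then show ?thesis
    using Psi_aa[of "(i, t)" n] by (intro bexI[of _ "(i, t)"]) (auto simp: S1_def letters_def)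
qed (fastforce simp: R2b_def R3a_def R5a_def S2_def letters_def intro: Psi_square)+

lemma sum_compl_S_pair:
  assumes n: "n \<ge> 2" and x: "x \<in> Delta n"
  shows "(\<Sum>(a, b)\<in>pairs n. sum x (Psi n - S_pair n a b))
    = 4 * real n * (real n - 1) * (1 - ((2 * real n - 2) * mean235 n x + mean4 n x))"
proof -
  have "(\<Sum>(a, b)\<in>pairs n. sum x (Psi n - S_pair n a b))
      = (\<Sum>(a, b)\<in>pairs n. 1 - sum x (S_pair n a b))"
    by (intro sum.cong) (auto simp: sum_compl_of_Delta[OF x] S_pair_subset)
  also have "\<dots> = real (card (pairs n)) - (\<Sum>(a, b)\<in>pairs n. sum x (S_pair n a b))"
    by (simp add: sum_subtractf case_prod_beta)
  also have "(\<Sum>(a, b)\<in>pairs n. sum x (S_pair n a b)) = 1 - 2 * real n * mean1 n x"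
    using sum_S_letter_total[OF x] sum_S_letter_split[of x n] n by (simp add: mean1_def)
  finally show ?thesis
    using means_mass[OF n x] real_card_letters_pairs_triples(2)[OF n]
    by (simp add: algebra_simps power2_eq_square)
qed

context
  fixes n :: nat and x :: "word \<Rightarrow> real" and \<beta> :: real
  assumes n: "n \<ge> 2" and x: "x \<in> Delta n" and \<beta>: "\<beta> \<ge> 1"
    and frel_le: "\<And>r. r \<in> RF n \<Longrightarrow> frel r x \<le> \<beta>"
begin

lemma RF_x_pos: "r \<in> RF n \<Longrightarrow> x (fst r) > 0"
  using RF_in_Psi by (blast intro: Delta_pos[OF x])

lemma RF_product_le:
  assumes r: "r \<in> RF n"
  shows "(1 - x (fst r)) * (1 - sum x (snd r)) \<le> \<beta> * x (fst r) * sum x (snd r)"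
proof (rule product_le_of_frel_le[OF frel_le[OF r] RF_x_pos[OF r]])
  obtain a where "[a,a] \<in> snd r" using RF_snd_has_square[OF r] by blast
  with RF_in_Psi[OF r] show "sum x (snd r) > 0" by (intro sum_pos_of_Delta[OF x]) auto
qed

lemma RF_family_average:
  assumes "finite I" "I \<noteq> {}" and r: "\<And>i. i \<in> I \<Longrightarrow> (w i, Y i) \<in> RF n"
    and "(\<Sum>i\<in>I. x (w i)) = real (card I) * U" and "(\<Sum>i\<in>I. sum x (Y i)) = real (card I) * V"
  shows "(1 - U) * (1 - V) \<le> \<beta> * U * V"
  using assms(1,2) RF_x_pos[OF r, unfolded fst_conv] RF_product_le[OF r, unfolded fst_conv snd_conv]
    \<beta> assms(4,5)
  by (rule product_le_average)

lemma mean1_bound: "1 - mean1 n x \<le> \<beta> * mean1 n x * (2 * real n - 1)"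
proof -
  have "(\<Sum>a\<in>letters n. sum x (Psi n - S_letter n a)) = (\<Sum>a\<in>letters n. 1 - sum x (S_letter n a))"
    by (intro sum.cong) (auto simp: sum_compl_of_Delta[OF x] S_letter_subset)
  also have "\<dots> = real (card (letters n)) * ((2 * real n - 1) / (2 * real n))"
    using sum_S_letter_total[OF x] real_card_letters_pairs_triples(1)[OF n] n
    by (simp add: sum_subtractf field_simps)
  finally have V: "(\<Sum>a\<in>letters n. sum x (Psi n - S_letter n a))
      = real (card (letters n)) * ((2 * real n - 1) / (2 * real n))" .
  have U: "(\<Sum>a\<in>letters n. x [a,a]) = real (card (letters n)) * mean1 n x"
    using real_card_letters_pairs_triples(1)[OF n] n by (simp add: mean1_def)
  have "(1 - mean1 n x) * (1 - (2 * real n - 1) / (2 * real n))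
      \<le> \<beta> * mean1 n x * ((2 * real n - 1) / (2 * real n))"
    using finite_letters letters_pairs_nonempty(1)[OF n] R1a_in_RF U V
    by (rule RF_family_average)
  moreover have "1 - (2 * real n - 1) / (2 * real n) = 1 / (2 * real n)" using n
    by (simp add: field_simps)
  ultimately have "(1 - mean1 n x) * (1 / (2 * real n))
      \<le> (\<beta> * mean1 n x * (2 * real n - 1)) * (1 / (2 * real n))" by simp
  then show ?thesis using n by (simp add: divide_le_cancel)
qed

lemma mean4_bound: "(1 - mean4 n x) * (2 * real n - 1) \<le> \<beta> * mean4 n x"
proof -
  have "(\<Sum>(a, b)\<in>pairs n. sum x (S_letter n a))
      = real (2*(n-1)) * (\<Sum>a\<in>letters n. sum x (S_letter n a))"
    by (rule sum_pairs_fst)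
  also have "\<dots> = real (card (pairs n)) * (1 / (2 * real n))"
    using sum_S_letter_total[OF x] real_card_letters_pairs_triples[OF n] n
    by (simp add: field_simps)
  finally have V: "(\<Sum>(a, b)\<in>pairs n. sum x (S_letter n a))
      = real (card (pairs n)) * (1 / (2 * real n))" .
  have U: "(\<Sum>(a, b)\<in>pairs n. x [a,b,letter_inv a]) = real (card (pairs n)) * mean4 n x"
    using real_card_letters_pairs_triples(2)[OF n] n by (simp add: mean4_def)
  have "(1 - mean4 n x) * (1 - 1 / (2 * real n)) \<le> \<beta> * mean4 n x * (1 / (2 * real n))"
    by (rule RF_family_average[where I="pairs n"
          and w="\<lambda>p. [fst p, snd p, letter_inv (fst p)]" and Y="\<lambda>p. S_letter n (fst p)"])
      (use finite_pairs letters_pairs_nonempty(2)[OF n] U V in \<open>auto simp: R4b_in_RF case_prod_beta\<close>)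
  moreover have "1 - 1 / (2 * real n) = (2 * real n - 1) * (1 / (2 * real n))" using n
    by (simp add: field_simps)
  ultimately have "((1 - mean4 n x) * (2 * real n - 1)) * (1 / (2 * real n))
      \<le> (\<beta> * mean4 n x) * (1 / (2 * real n))" by (simp add: mult.assoc)
  then show ?thesis using n by (simp add: divide_le_cancel)
qed

lemma mean235_bound:
  "(1 - mean235 n x) * ((2 * real n - 2) * mean235 n x + mean4 n x)
    \<le> \<beta> * mean235 n x * (1 - ((2 * real n - 2) * mean235 n x + mean4 n x))"
proof -
  define B S where "B = mean235 n x" and "S = (2 * real n - 2) * mean235 n x + mean4 n x"
  define X where "X p = Psi n - S_pair n (fst p) (snd p)" for p :: "letter \<times> letter"
  define I where "I = (pairs n <+> pairs n) <+> triples n"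
  define w :: "(letter \<times> letter + letter \<times> letter) + (letter \<times> letter) \<times> letter \<Rightarrow> word"
    where "w = case_sum (case_sum (\<lambda>p. [fst p, snd p, snd p]) (\<lambda>p. [snd p, fst p, snd p]))
    (\<lambda>t. [snd t, fst (fst t), snd (fst t)])"
  define Y :: "(letter \<times> letter + letter \<times> letter) + (letter \<times> letter) \<times> letter \<Rightarrow> word set"
    where "Y = case_sum (case_sum X X) (\<lambda>t. X (fst t))"
  note cards = real_card_letters_pairs_triples[OF n]
  have fin: "finite I" and ne: "I \<noteq> {}"
    unfolding I_def using letters_pairs_nonempty[OF n] by (auto simp: finite_pairs finite_triples)
  have card_I: "real (card I) = 8 * real n * (real n - 1)^2"
    unfolding I_def using cards
    by (simp add: card_Plus finite_pairs finite_triples algebra_simps power2_eq_square)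
  have "(w i, Y i) \<in> RF n" if "i \<in> I" for i
    using that unfolding I_def w_def Y_def X_def by (auto intro: R2b_in_RF R3a_in_RF R5a_in_RF)
  moreover have "(\<Sum>i\<in>I. x (w i)) = real (card I) * B"
    unfolding I_def w_def B_def mean235_def card_I[unfolded I_def] using n
    by (simp add: sum.Plus finite_pairs finite_triples comp_def case_prod_beta)
  moreover have "(\<Sum>i\<in>I. sum x (Y i)) = real (card I) * (1 - S)"
  proof -
    have pairs_X: "(\<Sum>p\<in>pairs n. sum x (X p)) = 4 * real n * (real n - 1) * (1 - S)"
      using sum_compl_S_pair[OF n x] unfolding X_def S_def by (simp add: case_prod_beta)
    have "(\<Sum>t\<in>triples n. sum x (X (fst t))) = (2 * real n - 4) * (\<Sum>p\<in>pairs n. sum x (X p))"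
      using sum_triples_fst[of "\<lambda>a b. sum x (X (a, b))" n] cards(5) by (simp add: case_prod_beta)
    then have triples_X: "(\<Sum>t\<in>triples n. sum x (X (fst t)))
        = (2 * real n - 4) * (4 * real n * (real n - 1) * (1 - S))"
      unfolding pairs_X .
    show ?thesis
      unfolding I_def Y_def card_I[unfolded I_def]
      by (simp add: sum.Plus finite_pairs finite_triples comp_def pairs_X triples_X)
        (simp add: algebra_simps power2_eq_square)
  qed
  ultimately have "(1 - B) * (1 - (1 - S)) \<le> \<beta> * B * (1 - S)"
    using fin ne by (intro RF_family_average) auto
  then show ?thesis unfolding B_def S_def by simp
qed

end

lemma means_opt_of_frel_le:
  assumes n: "n \<ge> 2" and l: "l > (2 * real n - 1)^2" and P: "Preal (real n) l = 0"
    and x: "x \<in> Delta n" and \<beta>: "1 \<le> \<beta>" "\<beta> \<le> l"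
    and frel_le: "\<And>r. r \<in> RF n \<Longrightarrow> frel r x \<le> \<beta>"
  shows "mean1 n x = a_opt (real n) l \<and> mean235 n x = b_opt (real n) l
    \<and> mean4 n x = c_opt (real n) l \<and> \<beta> = l"
proof -
  have "real n \<ge> 2" using n by simp
  from this l P means_pos[OF n x] means_mass[OF n x]
    mean1_bound[OF n x \<beta>(1) frel_le] mean4_bound[OF n x \<beta>(1) frel_le]
    mean235_bound[OF n x \<beta>(1) frel_le] \<beta>(2)
  show ?thesis by (rule scalar_constraints_force_opt)
qed

lemma Ffun_ge_root:
  assumes n: "n \<ge> 2" and l: "l > (2 * real n - 1)^2" and P: "Preal (real n) l = 0"
    and x: "x \<in> Delta n"
  shows "l \<le> Ffun n x"
proof (rule ccontr)
  define \<beta> where "\<beta> = max (Ffun n x) 2"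
  assume "\<not> l \<le> Ffun n x"
  moreover have "l > 9" using opt_basics[of "real n" l] n l by simp
  ultimately have "\<beta> < l" unfolding \<beta>_def by simp
  have "1 \<le> \<beta>" unfolding \<beta>_def by simp
  moreover have "frel r x \<le> \<beta>" if "r \<in> RF n" for r
    using frel_le_Ffun[OF that, of x] unfolding \<beta>_def by simp
  ultimately have "\<beta> = l"
    using means_opt_of_frel_le[OF n l P x _ less_imp_le[OF \<open>\<beta> < l\<close>]] by blast
  with \<open>\<beta> < l\<close> show False by simp
qed

section \<open>The upper bound: the point constant on the classes\<close>

lemma type1_aa: "a \<in> letters n \<Longrightarrow> type1 n [a,a]"
  by (cases a) (auto simp: type1_def letters_def)

lemma type2_abb: "(a, b) \<in> pairs n \<Longrightarrow> type2 n [a,b,b]"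
  by (cases a, cases b) (auto simp: type2_def pairs_mem letters_mem)

lemma type3_aba: "(a, b) \<in> pairs n \<Longrightarrow> type3 n [a,b,a]"
  by (cases a, cases b) (auto simp: type3_def pairs_mem letters_mem)

lemma type4_ab_inv: "(a, b) \<in> pairs n \<Longrightarrow> type4 n [a,b,letter_inv a]"
  by (cases a, cases b) (auto simp: type4_def pairs_mem letters_mem letter_inv_def)

lemma type5_abc: "(a, b) \<in> pairs n \<Longrightarrow> c \<in> letters_avoiding2 n a b \<Longrightarrow> type5 n [a,b,c]"
  by (cases a, cases b, cases c) (auto simp: type5_def pairs_mem letters_mem letters_avoiding2_def)

lemma not_type1_triple: "\<not> type1 n [a,b,c]"
  by (auto simp: type1_def)

lemma not_type4_abb: "(a, b) \<in> pairs n \<Longrightarrow> \<not> type4 n [a,b,b]"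
  by (cases a, cases b) (auto simp: type4_def pairs_mem)

lemma not_type4_aba: "(a, b) \<in> pairs n \<Longrightarrow> \<not> type4 n [a,b,a]"
  by (cases a, cases b) (auto simp: type4_def pairs_mem letters_mem Sg_def)

lemma not_type4_abc: "c \<in> letters_avoiding2 n a b \<Longrightarrow> \<not> type4 n [a,b,c]"
  by (cases a, cases b, cases c) (auto simp: type4_def letters_avoiding2_def)

definition class_const :: "nat \<Rightarrow> (word \<Rightarrow> real) \<Rightarrow> real \<Rightarrow> real \<Rightarrow> real \<Rightarrow> bool" where
  "class_const n x A B C \<longleftrightarrow> (\<forall>a\<in>letters n. x [a,a] = A)
     \<and> (\<forall>(a, b)\<in>pairs n. x [a,b,b] = B \<and> x [a,b,a] = B \<and> x [a,b,letter_inv a] = C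
         \<and> (\<forall>c\<in>letters_avoiding2 n a b. x [a,b,c] = B))"

lemma class_constD:
  assumes "class_const n x A B C"
  shows "a \<in> letters n \<Longrightarrow> x [a,a] = A"
    and "(a, b) \<in> pairs n \<Longrightarrow> x [a,b,b] = B"
    and "(a, b) \<in> pairs n \<Longrightarrow> x [a,b,a] = B"
    and "(a, b) \<in> pairs n \<Longrightarrow> x [a,b,letter_inv a] = C"
    and "(a, b) \<in> pairs n \<Longrightarrow> c \<in> letters_avoiding2 n a b \<Longrightarrow> x [a,b,c] = B"
  using assms unfolding class_const_def by fast+

lemma sum_S_pair_class_const:
  assumes n: "n \<ge> 2" and x: "class_const n x A B C" and p: "(a, b) \<in> pairs n"
  shows "sum x (S_pair n a b) = (2 * real n - 2) * B + C"
  using n p class_constD[OF x] card_letters_avoiding2[OF p]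
  by (simp add: sum_S_pair of_nat_diff algebra_simps)

lemma sum_S_letter_class_const:
  assumes n: "n \<ge> 2" and x: "class_const n x A B C" and a: "a \<in> letters n"
  shows "sum x (S_letter n a) = A + (2 * real n - 2) * ((2 * real n - 2) * B + C)"
proof -
  have "sum x (S_letter n a) = A + (\<Sum>b\<in>letters_avoiding n a. (2 * real n - 2) * B + C)"
    unfolding sum_S_letter[OF a] using class_constD(1)[OF x a] sum_S_pair_class_const[OF n x] a
    by (simp add: pairs_def)
  then show ?thesis
    using n a card_letters_avoiding[of a n] by (simp add: letters_mem of_nat_diff)
qed

lemma sum_Psi_class_const:
  assumes n: "n \<ge> 2" and x: "class_const n x A B C"
  shows "sum x (Psi n)
    = 2 * real n * A + 8 * real n * (real n - 1)^2 * B + 4 * real n * (real n - 1) * C"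
proof -
  have "sum x (Psi n) = 2 * real n * (A + (2 * real n - 2) * ((2 * real n - 2) * B + C))"
    using sum_S_letter_class_const[OF n x] by (simp add: sum_Psi_by_first_letter card_letters)
  then show ?thesis by (simp add: algebra_simps power2_eq_square)
qed

lemma means_class_const:
  assumes n: "n \<ge> 2" and x: "class_const n x A B C"
  shows "mean1 n x = A" "mean235 n x = B" "mean4 n x = C"
proof -
  note cards = real_card_letters_pairs_triples[OF n]
  have "x [c,a,b] = B" if "((a, b), c) \<in> triples n" for a b c
    using that class_constD(5)[OF x, of c a b]
    by (auto simp: triples_mem pairs_mem letters_avoiding2_def)
  then have e5: "(\<Sum>((a, b), c)\<in>triples n. x [c,a,b]) = (\<Sum>t\<in>triples n. B)"
    by (intro sum.cong) auto
  have e2: "(\<Sum>(a, b)\<in>pairs n. x [a,b,b]) = (\<Sum>p\<in>pairs n. B)"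
    and e3: "(\<Sum>(a, b)\<in>pairs n. x [b,a,b]) = (\<Sum>p\<in>pairs n. B)"
    and e4: "(\<Sum>(a, b)\<in>pairs n. x [a,b,letter_inv a]) = (\<Sum>p\<in>pairs n. C)"
    using class_constD(2-4)[OF x] by (safe intro!: sum.cong) (auto simp: pairs_mem)
  have e1: "(\<Sum>a\<in>letters n. x [a,a]) = (\<Sum>a\<in>letters n. A)"
    using class_constD(1)[OF x] by simp
  have "(2 * real n) * mean1 n x = (2 * real n) * A"
    "(8 * real n * (real n - 1)^2) * mean235 n x = (8 * real n * (real n - 1)^2) * B"
    "(4 * real n * (real n - 1)) * mean4 n x = (4 * real n * (real n - 1)) * C"
    using n unfolding mean1_def mean235_def mean4_def e1 e2 e3 e4 e5 sum_constant cards
    by (simp_all, algebra)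
  then show "mean1 n x = A" "mean235 n x = B" "mean4 n x = C" using n by simp_all
qed

definition odds :: "real \<Rightarrow> real" where
  "odds t = (1 - t) / t"

lemma frel_eq_odds: "frel r x = odds (x (fst r)) * odds (sum x (snd r))"
  by (simp add: frel_def odds_def Let_def)

lemma letters_Pair_mem: "(i, t) \<in> letters n \<longleftrightarrow> i \<in> {1..n} \<and> t \<in> Sg"
  by (simp add: letters_def)

lemma pairs_Pair_mem:
  "((i, t), (j, s)) \<in> pairs n \<longleftrightarrow> i \<in> {1..n} \<and> t \<in> Sg \<and> j \<in> {1..n} \<and> s \<in> Sg \<and> i \<noteq> j"
  by (auto simp: pairs_mem letters_def)

lemma class_const_words:
  assumes x: "class_const n x A B C"
  shows "(i, t) \<in> letters n \<Longrightarrow> x [(i,t),(i,t)] = A"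
    and "((i, t), (j, s)) \<in> pairs n \<Longrightarrow> x [(i,t),(j,s),(j,s)] = B"
    and "((i, t), (j, s)) \<in> pairs n \<Longrightarrow> x [(i,t),(j,s),(i,t)] = B"
    and "((i, t), (j, s)) \<in> pairs n \<Longrightarrow> x [(i,t),(j,s),(i,-t)] = C"
    and "((i, t), (j, s)) \<in> pairs n \<Longrightarrow> k \<in> {1..n} \<Longrightarrow> p \<in> Sg \<Longrightarrow> k \<noteq> i \<Longrightarrow> k \<noteq> j
      \<Longrightarrow> x [(i,t),(j,s),(k,p)] = B"
  using class_constD[OF x]
  by (auto simp: pairs_mem letter_inv_def letters_avoiding2_def letters_Pair_mem)

lemma sum_S1_class_const:
  assumes n: "n \<ge> 2" and x_const: "class_const n x A B C" and "i \<in> {1..n}" "t \<in> Sg"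
  shows "sum x (S1 n i t) = A + (2 * real n - 2) * ((2 * real n - 2) * B + C)"
  using sum_S_letter_class_const[OF n x_const, of "(i, t)"] assms(3,4)
  by (simp add: S_letter_def letters_Pair_mem)

lemma sum_compl_S2_class_const:
  assumes n: "n \<ge> 2" and x: "x \<in> Delta n" and x_const: "class_const n x A B C"
    and ij: "((i, t), (j, s)) \<in> pairs n"
  shows "sum x (Psi n - S2 n i t j s) = 1 - ((2 * real n - 2) * B + C)"
  using sum_S_pair_class_const[OF n x_const ij] sum_compl_of_Delta[OF x S_pair_subset[OF ij]]
  by (simp add: S_pair_def)

lemma frel_class_const_pair_relations:
  assumes n: "n \<ge> 2" and x: "x \<in> Delta n" and x_const: "class_const n x A B C"
    and r: "r \<in> R2b n \<union> R3a n \<union> R4a n \<union> R5a n \<union> R5b n"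
  defines "S \<equiv> (2 * real n - 2) * B + C"
  shows "frel r x \<in> {odds B * odds (1 - S), odds C * odds (1 - S)}"
proof -
  note P = pairs_Pair_mem and words = class_const_words[OF x_const]
    and compl = sum_compl_S2_class_const[OF n x x_const, folded S_def]
  from r show ?thesis
  proof (elim UnE)
    assume "r \<in> R2b n"
    then obtain i t j s where "r = ([(i,t),(j,s),(j,s)], Psi n - S2 n i t j s)"
      "((i,t),(j,s)) \<in> pairs n"
      unfolding R2b_def P by blast
    then show ?thesis by (simp add: frel_eq_odds words(2) compl)
  next
    assume "r \<in> R3a n"
    then obtain i t j s where "r = ([(i,t),(j,s),(i,t)], Psi n - S2 n j s i t)"
      "((i,t),(j,s)) \<in> pairs n"
      unfolding R3a_def P by blast
    moreover from this(2) have "((j,s),(i,t)) \<in> pairs n" by (auto simp: P)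
    ultimately show ?thesis by (simp add: frel_eq_odds words(3) compl)
  next
    assume "r \<in> R4a n"
    then obtain i t j s where "r = ([(i,t),(j,s),(i,-t)], Psi n - S2 n j s i (-t))"
      "((i,t),(j,s)) \<in> pairs n"
      unfolding R4a_def P by blast
    moreover from this(2) have "((j,s),(i,-t)) \<in> pairs n" by (auto simp: P Sg_simps)
    ultimately show ?thesis by (simp add: frel_eq_odds words(4) compl)
  next
    assume "r \<in> R5a n"
    then obtain i t j s k p where "r = ([(i,t),(j,s),(k,p)], Psi n - S2 n j s k p)"
      "((i,t),(j,s)) \<in> pairs n" "k \<in> {1..n}" "p \<in> Sg" "k \<noteq> i" "k \<noteq> j"
      unfolding R5a_def P by blast
    moreover from this(2-6) have "((j,s),(k,p)) \<in> pairs n" by (auto simp: P)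
    ultimately show ?thesis by (simp add: frel_eq_odds words(5) compl)
  next
    assume "r \<in> R5b n"
    then obtain i t j s k p where "r = ([(i,t),(j,s),(k,p)], Psi n - S2 n i t k p)"
      "((i,t),(j,s)) \<in> pairs n" "k \<in> {1..n}" "p \<in> Sg" "k \<noteq> i" "k \<noteq> j"
      unfolding R5b_def P by blast
    moreover from this(2-6) have "((i,t),(k,p)) \<in> pairs n" by (auto simp: P)
    ultimately show ?thesis by (simp add: frel_eq_odds words(5) compl)
  qed
qed

lemma frel_class_const_other_relations:
  assumes n: "n \<ge> 2" and x: "x \<in> Delta n" and x_const: "class_const n x A B C"
    and r: "r \<in> R1a n \<union> R1b n \<union> R2a n \<union> R3b n \<union> R4b n"
  defines "s1 \<equiv> A + (2 * real n - 2) * ((2 * real n - 2) * B + C)"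
  shows "frel r x \<in> {odds A * odds (1 - s1), odds A * odds (1 - B), odds B * odds (1 - A),
    odds C * odds s1}"
proof -
  note P = pairs_Pair_mem and words = class_const_words[OF x_const]
    and S1_sum = sum_S1_class_const[OF n x_const, folded s1_def]
  from r show ?thesis
  proof (elim UnE)
    assume "r \<in> R1a n"
    then obtain i t where it: "r = ([(i,t),(i,t)], Psi n - S1 n i t)" "i \<in> {1..n}" "t \<in> Sg"
      unfolding R1a_def by blast
    then have "sum x (Psi n - S1 n i t) = 1 - s1"
      using S1_sum sum_compl_of_Delta[OF x S_letter_subset, of "(i, t)"] by (simp add: S_letter_def)
    then show ?thesis using it by (simp add: frel_eq_odds words(1) letters_Pair_mem)
  next
    assume "r \<in> R1b n"
    then obtain i t j s where "r = ([(i,t),(i,t)], Psi n - {[(i,t),(j,s),(i,t)]})"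
      "((i,t),(j,s)) \<in> pairs n"
      unfolding R1b_def P by blast
    moreover from this(2) have "[(i,t),(j,s),(i,t)] \<in> Psi n"
      using Psi_abc[of "(i, t)" "(j, s)" n "(i, t)"] by (simp add: P letters_Pair_mem)
    ultimately show ?thesis
      using words(1,3) sum_compl_of_Delta[OF x, of "{[(i,t),(j,s),(i,t)]}"]
      by (simp add: frel_eq_odds P letters_Pair_mem)
  next
    assume "r \<in> R2a n"
    then obtain i t j s where "r = ([(i,t),(j,s),(j,s)], Psi n - {[(j,s),(j,s)]})"
      "((i,t),(j,s)) \<in> pairs n"
      unfolding R2a_def P by blast
    then show ?thesis
      using words(1,2) Psi_square sum_compl_of_Delta[OF x, of "{[(j,s),(j,s)]}"]
      by (simp add: frel_eq_odds P letters_Pair_mem)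
  next
    assume "r \<in> R3b n"
    then obtain i t j s where "r = ([(i,t),(j,s),(i,t)], Psi n - {[(i,t),(i,t)]})"
      "((i,t),(j,s)) \<in> pairs n"
      unfolding R3b_def P by blast
    then show ?thesis
      using words(1,3) Psi_square sum_compl_of_Delta[OF x, of "{[(i,t),(i,t)]}"]
      by (simp add: frel_eq_odds P letters_Pair_mem)
  next
    assume "r \<in> R4b n"
    then obtain i t j s where "r = ([(i,t),(j,s),(i,-t)], S1 n i t)"
      "((i,t),(j,s)) \<in> pairs n"
      unfolding R4b_def P by blast
    then show ?thesis
      using S1_sum words(4) by (simp add: frel_eq_odds P)
  qed
qed

lemma frel_class_const_cases:
  assumes n: "n \<ge> 2" and x: "x \<in> Delta n" and x_const: "class_const n x A B C"
    and r: "r \<in> RG n"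
  defines "S \<equiv> (2 * real n - 2) * B + C"
  defines "s1 \<equiv> A + (2 * real n - 2) * S"
  shows "frel r x \<in> {odds A * odds (1 - s1), odds A * odds (1 - B), odds B * odds (1 - A),
    odds B * odds (1 - S), odds C * odds (1 - S), odds C * odds s1}"
proof -
  have "r \<in> R1a n \<union> R1b n \<union> R2a n \<union> R3b n \<union> R4b n
      \<or> r \<in> R2b n \<union> R3a n \<union> R4a n \<union> R5a n \<union> R5b n"
    using r unfolding RG_def by blast
  then show ?thesis
    using frel_class_const_other_relations[OF n x x_const]
      frel_class_const_pair_relations[OF n x x_const]
    unfolding s1_def S_def by blast
qed

lemma opt_odds:
  fixes n l :: real
  assumes n: "n \<ge> 2" and l: "l > (2*n-1)^2" and P: "Preal n l = 0"
  defines "a \<equiv> a_opt n l" and "b \<equiv> b_opt n l" and "c \<equiv> c_opt n l"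
  defines "S \<equiv> (2*n-2) * b + c"
  shows "odds a = (2*n-1) * l" "odds c = l / (2*n-1)" "odds b = l * (1 - S) / S"
    "a + (2*n-2) * S = 1 / (2*n)" "0 < S" "S \<le> 1/8" "c \<le> S" "2*n*b \<le> 1"
proof -
  note basics = opt_basics[OF n l, folded a_def b_def c_def]
  have N: "2*n-1 \<ge> 3" using n by simp
  have "a * ((2*n-1)*l + 1) = 1" using basics N unfolding a_def a_opt_def by simp
  then show "odds a = (2*n-1) * l" using basics unfolding odds_def by (simp add: field_simps)
  have "c * (2*n-1+l) = 2*n-1" using basics N unfolding c_def c_opt_def by simp
  then show "odds c = l / (2*n-1)" using basics N unfolding odds_def by (simp add: field_simps)
  have mass: "2*n*a + 8*n*(n-1)^2*b + 4*n*(n-1)*c = 1"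
    using opt_mass[OF n l P] unfolding a_def b_def c_def .
  have mS: "2*n*a + 4*n*(n-1)*S = 1" using mass unfolding S_def by algebra
  then show "a + (2*n-2) * S = 1 / (2*n)" using n by (simp add: field_simps)
  show S0: "0 < S" "c \<le> S" unfolding S_def using basics n by (simp_all add: add_nonneg_pos)
  have "n*(n-1) \<ge> 2*1" using n by (intro mult_mono) auto
  then have "8*S \<le> 4*n*(n-1)*S" using S0 by (intro mult_right_mono) auto
  moreover have "2*n*a > 0" using basics n by simp
  ultimately show S8: "S \<le> 1/8" using mS by linarith
  have "(1 - b) * S = l * b * (1 - S)"
    using opt_balance[OF n l P] unfolding b_def c_def S_def by simp
  then show "odds b = l * (1 - S) / S" using basics S0 unfolding odds_def by (simp add: field_simps)
  have "(n-1)^2 \<ge> 1" using n by (simp add: one_le_power)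
  then have "8*n*1 \<le> 8*n*(n-1)^2" using n by (intro mult_left_mono) auto
  then have "2*n \<le> 8*n*(n-1)^2" using n by linarith
  then have "2*n*b \<le> 8*n*(n-1)^2*b" using basics by (simp add: mult_right_mono)
  moreover have "4*n*(n-1)*c > 0" using n basics by simp
  ultimately show "2*n*b \<le> 1" using mass basics n by (smt (verit) mult_pos_pos)
qed

lemma odds_one_minus: "odds (1 - t) = 1 / odds t"
  by (simp add: odds_def)

lemma opt_odds_products_le:
  fixes n l :: real
  assumes n: "n \<ge> 2" and l: "l > (2*n-1)^2" and P: "Preal n l = 0"
  defines "a \<equiv> a_opt n l" and "b \<equiv> b_opt n l" and "c \<equiv> c_opt n l"
  defines "S \<equiv> (2*n-2) * b + c"
  defines "s1 \<equiv> a + (2*n-2) * S"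
  shows "odds a * odds (1 - s1) \<le> l" "odds a * odds (1 - b) \<le> l" "odds b * odds (1 - a) \<le> l"
    "odds b * odds (1 - S) \<le> l" "odds c * odds (1 - S) \<le> l" "odds c * odds s1 \<le> l"
proof -
  define N where "N = 2*n-1"
  note basics = opt_basics[OF n l, folded a_def b_def c_def]
  note odds = opt_odds[OF n l P, folded a_def b_def c_def, folded S_def N_def]
  have N3: "N \<ge> 3" and l9: "l > 9" using n basics unfolding N_def by auto
  have s1_eq: "s1 = 1 / (2*n)" using odds(4) unfolding s1_def .
  have s1: "odds s1 = N" unfolding s1_eq N_def odds_def using n by (simp add: field_simps)
  show "odds a * odds (1 - s1) \<le> l" using odds(1) s1 N3 by (simp add: odds_one_minus)
  show "odds c * odds s1 \<le> l" using odds(2) s1 N3 by simp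
  show "odds b * odds (1 - S) \<le> l"
    using odds(3,5,6) by (simp add: odds_one_minus odds_def)
  have "N * b \<le> 1 - b" using odds(8) unfolding N_def by (simp add: algebra_simps)
  moreover have "b < 1" using calculation N3 basics by (smt (verit) mult_pos_pos)
  ultimately have "N * b / (1 - b) \<le> 1" by simp
  then have "l * (N * b / (1 - b)) \<le> l * 1" using l9 by (intro mult_left_mono) auto
  then have "N * l * b / (1 - b) \<le> l" by (simp add: mult_ac)
  then show "odds a * odds (1 - b) \<le> l"
    using odds(1) by (simp add: odds_one_minus odds_def)
  have "N * N * l \<ge> 1 * 1 * l" using N3 l9 by (intro mult_mono) auto
  then have "c * (N * l + 1) \<ge> 1"
    using N3 l9 unfolding c_def c_opt_def N_def[symmetric] by (simp add: field_simps)
  then have "S * (N * l + 1) \<ge> 1"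
    using odds(7) N3 l9 by (smt (verit) mult_right_mono mult_nonneg_nonneg)
  then have "(1 - S) / (S * N) \<le> l" using odds(5) N3 by (simp add: divide_le_eq algebra_simps)
  moreover have "odds b * odds (1 - a) = (1 - S) / (S * N)"
    unfolding odds_one_minus odds(1,3) using l9 N3 odds(5) by simp
  ultimately show "odds b * odds (1 - a) \<le> l" by simp
  have "N * S \<le> N * (1/8)" using odds(6) N3 by (intro mult_left_mono) auto
  moreover have "N * (1 - S) = N - N * S" by (simp add: algebra_simps)
  ultimately have "S \<le> N * (1 - S)" using odds(6) N3 by linarith
  then have "S / (1 - S) \<le> N" using odds(6) by (simp add: divide_le_eq)
  then have "l / N * (S / (1 - S)) \<le> l / N * N" using l9 N3 by (intro mult_left_mono) auto
  then show "odds c * odds (1 - S) \<le> l"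
    using odds(2) N3 by (simp add: odds_one_minus odds_def)
qed

definition opt_point :: "nat \<Rightarrow> real \<Rightarrow> word \<Rightarrow> real" where
  "opt_point n l w =
    (if w \<notin> Psi n then 0
     else if type1 n w then a_opt (real n) l
     else if type4 n w then c_opt (real n) l
     else b_opt (real n) l)"

lemma opt_point_class_const:
  "class_const n (opt_point n l) (a_opt (real n) l) (b_opt (real n) l) (c_opt (real n) l)"
  unfolding class_const_def
proof (intro conjI ballI, goal_cases)
  case (1 a)
  then show ?case using Psi_aa type1_aa by (simp add: opt_point_def)
next
  case (2 p)
  obtain a b where p: "p = (a, b)" "(a, b) \<in> pairs n" using 2 by (cases p) auto
  have a: "a \<in> letters n" "fst a \<noteq> fst b" using p by (auto simp: pairs_mem)
  have "c \<in> letters n" "fst c \<noteq> fst b" if "c \<in> letters_avoiding2 n a b" for c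
    using that by (auto simp: letters_avoiding2_def)
  then show ?case
    using p Psi_abb[OF p(2)] Psi_abc[OF p(2)] a letter_inv_simps(1) letter_inv_simps(2,3)[of a n]
      not_type1_triple not_type4_abb[OF p(2)] not_type4_aba[OF p(2)] type4_ab_inv[OF p(2)] not_type4_abc
    by (auto simp: opt_point_def)
qed

lemma opt_point_in_Delta:
  assumes n: "n \<ge> 2" and l: "l > (2 * real n - 1)^2" and P: "Preal (real n) l = 0"
  shows "opt_point n l \<in> Delta n"
proof -
  have rn: "real n \<ge> 2" using n by simp
  have "opt_point n l w > 0" if "w \<in> Psi n" for w
    using that opt_basics[OF rn l] by (simp add: opt_point_def)
  moreover have "sum (opt_point n l) (Psi n) = 1"
    using sum_Psi_class_const[OF n opt_point_class_const] opt_mass[OF rn l P] by simp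
  ultimately show ?thesis unfolding Delta_def by (auto simp: opt_point_def)
qed

lemma Gfun_opt_point_le:
  assumes n: "n \<ge> 2" and l: "l > (2 * real n - 1)^2" and P: "Preal (real n) l = 0"
  shows "Gfun n (opt_point n l) \<le> l"
proof -
  have rn: "real n \<ge> 2" using n by simp
  have "RG n \<noteq> {}"
    using R1a_in_RF[of "(1, 1)" n] RF_subset_RG[of n] n by (auto simp: letters_def Sg_def)
  moreover have "frel r (opt_point n l) \<le> l" if "r \<in> RG n" for r
    using frel_class_const_cases[OF n opt_point_in_Delta[OF n l P] opt_point_class_const that]
      opt_odds_products_le[OF rn l P] by auto
  ultimately show ?thesis unfolding Gfun_def using finite_RG by (subst Max_le_iff) auto
qed

section \<open>The extremal values\<close>

lemma Ffun_le_Gfun: "n \<ge> 1 \<Longrightarrow> Ffun n x \<le> Gfun n x"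
  unfolding Ffun_def Gfun_def using R1a_in_RF[of "(1, 1)" n] RF_subset_RG finite_RG
  by (intro Max_mono) (auto simp: letters_def Sg_def)

lemma INF_eq_root:
  assumes n: "n \<ge> 2" and l: "l > (2 * real n - 1)^2" and P: "Preal (real n) l = 0"
  shows "(INF x\<in>Delta n. Ffun n x) = l" "(INF x\<in>Delta n. Gfun n x) = l"
proof -
  have x: "opt_point n l \<in> Delta n" by (rule opt_point_in_Delta[OF n l P])
  have lower: "l \<le> Ffun n y" "l \<le> Gfun n y" if "y \<in> Delta n" for y
    using Ffun_ge_root[OF n l P that] Ffun_le_Gfun[of n y] n by auto
  have "Ffun n (opt_point n l) = l" "Gfun n (opt_point n l) = l"
    using Gfun_opt_point_le[OF n l P] lower[OF x] Ffun_le_Gfun[of n "opt_point n l"] n by auto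
  then show "(INF x\<in>Delta n. Ffun n x) = l" "(INF x\<in>Delta n. Gfun n x) = l"
    using x lower by (auto intro!: cInf_eq_minimum[of l] image_eqI[of l _ "opt_point n l"])
qed

text \<open>Every root above (2n - 1)^2 equals the infimum of F, so there is only one.\<close>

lemma alpha_root:
  assumes n: "n \<ge> 2"
  shows "alpha n > (2 * real n - 1)^2" and "Preal (real n) (alpha n) = 0"
proof -
  obtain l0 where l0: "l0 > (2 * real n - 1)^2" "Preal (real n) l0 = 0"
    using Preal_root_exists[of "real n"] n by auto
  have "\<exists>!l. l > (2 * real n - 1)^2 \<and> Ppoly n l = 0"
  proof (rule ex1I[of _ l0])
    fix l assume "l > (2 * real n - 1)^2 \<and> Ppoly n l = 0"
    then show "l = l0" using INF_eq_root(1)[OF n] l0 by (auto simp: Ppoly_eq_Preal)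
  qed (use l0 in \<open>simp add: Ppoly_eq_Preal\<close>)
  from theI'[OF this] show "alpha n > (2 * real n - 1)^2" "Preal (real n) (alpha n) = 0"
    unfolding alpha_def by (simp_all add: Ppoly_eq_Preal)
qed

theorem theorem5p10:
  fixes n :: nat and xs :: "word \<Rightarrow> real" and a b c :: real
  assumes n2: "n \<ge> 2"
    and xs_Delta: "xs \<in> Delta n"
    and xs_min: "Ffun n xs = (INF x\<in>Delta n. Ffun n x)"
    and abc: "a \<in> {0<..<1}" "b \<in> {0<..<1}" "c \<in> {0<..<1}"
    and t1: "\<And>\<psi>. type1 n \<psi> \<Longrightarrow> xs \<psi> = a"
    and t235: "\<And>\<psi>. type2 n \<psi> \<or> type3 n \<psi> \<or> type5 n \<psi> \<Longrightarrow> xs \<psi> = b"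
    and t4: "\<And>\<psi>. type4 n \<psi> \<Longrightarrow> xs \<psi> = c"
  shows "a = 1 / ((2 * real n - 1) * alpha n + 1)
       \<and> b = (2 * real n - 1) * (alpha n - 1) /
             ((4 * real n ^ 2 - 4 * real n - 1) * (2 * real n - 1) * (alpha n)^2
              + 2 * (2 * real n ^ 2 - 1) * alpha n - (2 * real n - 1))
       \<and> c = (2 * real n - 1) / (2 * real n - 1 + alpha n)
       \<and> (INF x\<in>Delta n. Ffun n x) = alpha n
       \<and> (INF x\<in>Delta n. Gfun n x) = alpha n"
proof -
  note root = alpha_root[OF n2]
  note INF = INF_eq_root[OF n2 root]
  have "class_const n xs a b c"
    unfolding class_const_def using t1 t235 t4
    by (auto intro: type1_aa type2_abb type3_aba type4_ab_inv type5_abc)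
  then have means: "mean1 n xs = a" "mean235 n xs = b" "mean4 n xs = c"
    using means_class_const[OF n2] by auto
  have "1 \<le> alpha n" using opt_basics[of "real n" "alpha n"] root n2 by simp
  moreover have "frel r xs \<le> alpha n" if "r \<in> RF n" for r
    using frel_le_Ffun[OF that, of xs] xs_min INF(1) by simp
  ultimately have "a = a_opt (real n) (alpha n) \<and> b = b_opt (real n) (alpha n)
      \<and> c = c_opt (real n) (alpha n)"
    using means_opt_of_frel_le[OF n2 root xs_Delta] means by auto
  then show ?thesis using INF unfolding a_opt_def b_opt_def c_opt_def b_denom_def by simp
qed

end
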